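(* Let $k$ be a field of prime characteristic $p$ and $d$ a positive integer. Define $T$-spaces $S^{(d)}_n$ of $k_0\langle X\rangle$ by $S^{(d)}_1=\{S^{(d)}\}^S$ and $S^{(d)}_{n+1}=(S^{(d)}_nS^{(d)}_1)^S$ for $n\ge1$, where $S^{(d)}=S^{(d)}(x_1,\ldots,x_d)=\sum_{\sigma\in\Sigma_d}\prod_{i=1}^d x_{\sigma(i)}$. Then (i) for all $m,n\ge1$, $(S^{(d)}_mS^{(d)}_n)^S=S^{(d)}_{m+n}$; (ii) for all $m\ge1$, $S^{(d)}_{2m+1}\subseteq S^{(d)}_{m+1}+S^{(d)}_1$.
   Context: $X=\{x_1,x_2,\ldots\}$ is countably infinite; $k_0\langle X\rangle$ is the free associative (non-unital) $k$-algebra on $X$. A $T$-space is a $k$-subspace of $k_0\langle X\rangle$ invariant under every algebra endomorphism of $k_0\langle X\rangle$; $(A)^S$ is the $T$-space generated by a subset $A$. For subsets $A,B$, $AB=\{ab:a\in A,b\in B\}$. $\Sigma_d$ is the symmetric group on $d$ letters. *)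

theory Defs
  imports Main "HOL-Combinatorics.Permutations" "HOL-Computational_Algebra.Primes"
begin

text \<open>The free non-unital associative algebra k_0<X> on X = {x_0, x_1, ...}:
  elements are finitely supported coefficient functions on words (lists of
  variable indices), with coefficient 0 on the empty word.\<close>

type_synonym 'k fa = "nat list \<Rightarrow> 'k"

definition FA :: "('k::field) fa set" where
  "FA = {f. finite {w. f w \<noteq> 0} \<and> f [] = 0}"

definition fa_add :: "('k::field) fa \<Rightarrow> 'k fa \<Rightarrow> 'k fa" where
  "fa_add f g = (\<lambda>w. f w + g w)"

definition fa_smult :: "'k::field \<Rightarrow> 'k fa \<Rightarrow> 'k fa" where
  "fa_smult c f = (\<lambda>w. c * f w)"

definition fa_zero :: "('k::field) fa" where
  "fa_zero = (\<lambda>w. 0)"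

definition fa_mult :: "('k::field) fa \<Rightarrow> 'k fa \<Rightarrow> 'k fa" where
  "fa_mult f g = (\<lambda>w. \<Sum>i\<le>length w. f (take i w) * g (drop i w))"

definition fa_mono :: "nat list \<Rightarrow> ('k::field) fa" where
  "fa_mono v = (\<lambda>w. if w = v then 1 else 0)"

definition fa_endo :: "(('k::field) fa \<Rightarrow> 'k fa) \<Rightarrow> bool" where
  "fa_endo h \<longleftrightarrow> (\<forall>f\<in>FA. h f \<in> FA)
     \<and> (\<forall>f\<in>FA. \<forall>g\<in>FA. h (fa_add f g) = fa_add (h f) (h g))
     \<and> (\<forall>c. \<forall>f\<in>FA. h (fa_smult c f) = fa_smult c (h f))
     \<and> (\<forall>f\<in>FA. \<forall>g\<in>FA. h (fa_mult f g) = fa_mult (h f) (h g))"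

definition fa_subspace :: "('k::field) fa set \<Rightarrow> bool" where
  "fa_subspace V \<longleftrightarrow> V \<subseteq> FA \<and> fa_zero \<in> V
     \<and> (\<forall>f\<in>V. \<forall>g\<in>V. fa_add f g \<in> V) \<and> (\<forall>c. \<forall>f\<in>V. fa_smult c f \<in> V)"

definition T_space :: "('k::field) fa set \<Rightarrow> bool" where
  "T_space V \<longleftrightarrow> fa_subspace V \<and> (\<forall>h. fa_endo h \<longrightarrow> (\<forall>f\<in>V. h f \<in> V))"

definition T_gen :: "('k::field) fa set \<Rightarrow> 'k fa set" where
  "T_gen A = \<Inter>{V. T_space V \<and> A \<subseteq> V}"

definition set_mult :: "('k::field) fa set \<Rightarrow> 'k fa set \<Rightarrow> 'k fa set" where
  "set_mult A B = {fa_mult a b | a b. a \<in> A \<and> b \<in> B}"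

definition set_add :: "('k::field) fa set \<Rightarrow> 'k fa set \<Rightarrow> 'k fa set" where
  "set_add A B = {fa_add a b | a b. a \<in> A \<and> b \<in> B}"

definition S_poly :: "nat \<Rightarrow> ('k::field) fa" where
  "S_poly d = (\<lambda>w. \<Sum>\<sigma>\<in>{\<sigma>. \<sigma> permutes {1..d}}. fa_mono (map \<sigma> [1..<Suc d]) w)"

text \<open>S_n^(d) for n \<ge> 1 (index 0 is a junk value).\<close>
fun S_T :: "nat \<Rightarrow> nat \<Rightarrow> ('k::field) fa set" where
  "S_T d 0 = {}"
| "S_T d (Suc 0) = T_gen {S_poly d}"
| "S_T d (Suc (Suc n)) = T_gen (set_mult (S_T d (Suc n)) (S_T d (Suc 0)))"

end

theory Submission
  imports Defs
begin

text \<open>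
  For \<open>\<psi> : I \<rightarrow> R\<close> with values in any ring let \<open>F(\<psi>) = \<Sum>\<^sub>\<sigma> \<Prod>\<^sub>i \<psi>(\<sigma> i)\<close> be the symmetrised
  product. For \<open>a \<in> I\<close> and \<open>J = I - {a}\<close> one has the ring identity
    \<open>M F(\<phi>) N = F(\<phi>[a := M\<phi>a]) N + \<Sum>\<^sub>j F(\<phi>[a := M\<phi>a, j := N\<phi>j]) - \<Sum>\<^sub>j F(\<phi>[a := N, j := \<phi>j M\<phi>a])
                - \<Sum>\<^sub>j M F(\<phi>[j := N\<phi>j]) + \<Sum>\<^sub>j M F(\<phi>[a := N, j := \<phi>j \<phi>a])\<close>,
  proved by expanding every term according to the position of the factor indexed by \<open>a\<close>; the
  terms then form a double sum over two positions, and the identity is a cancellation of its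
  boundary rows and columns.

  An endomorphism maps \<open>S\<^sup>(\<^sup>d\<^sup>)\<close> to \<open>F(\<psi>)\<close>, where \<open>\<psi> i\<close> is the image of \<open>x\<^sub>i\<close>, so \<open>S\<^sub>1\<close> is spanned
  by these \<open>F(\<psi>)\<close>. A product of two T-spaces is closed under endomorphisms, hence \<open>S\<^sub>n\<close> is the
  linear span of the \<open>n\<close>-fold products of elements of \<open>S\<^sub>1\<close>; this gives (i). For (ii), \<open>S\<^sub>2\<^sub>m\<^sub>+\<^sub>1\<close>
  is spanned by products \<open>M F(\<psi>) N\<close> with \<open>M, N \<in> S\<^sub>m\<close>, and the identity (with \<open>a = 1\<close>) writes
  such a product as a combination of elements of \<open>S\<^sub>1 S\<^sub>m\<close>, \<open>S\<^sub>1\<close> and \<open>S\<^sub>m S\<^sub>1\<close>. The identity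
  holds in every ring.
\<close>

section \<open>Symmetrised products in a ring\<close>

text \<open>\<open>sym_interleave n I \<psi> g\<close> is the sum of
  \<open>g 0 * \<psi> i\<^sub>1 * g 1 * \<dots> * \<psi> i\<^sub>n * g n\<close> over all sequences of \<open>n\<close> distinct indices
  \<open>i\<^sub>1, \<dots>, i\<^sub>n\<close> from \<open>I\<close>; with all weights \<open>g k = 1\<close> and \<open>n = card I\<close> it is the
  symmetrised product \<open>sym_prod I \<psi> = \<Sum>\<sigma>. \<Prod>i. \<psi> (\<sigma> i)\<close>. The weights \<open>spike k x\<close> put \<open>x\<close>
  into the \<open>k\<close>-th gap.\<close>

primrec sym_interleave :: "nat \<Rightarrow> 'i set \<Rightarrow> ('i \<Rightarrow> 'a::ring_1) \<Rightarrow> (nat \<Rightarrow> 'a) \<Rightarrow> 'a" where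
  "sym_interleave 0 I \<psi> g = g 0"
| "sym_interleave (Suc n) I \<psi> g = (\<Sum>i\<in>I. g 0 * \<psi> i * sym_interleave n (I - {i}) \<psi> (\<lambda>k. g (Suc k)))"

definition sym_prod :: "'i set \<Rightarrow> ('i \<Rightarrow> 'a::ring_1) \<Rightarrow> 'a" where
  "sym_prod I \<psi> = sym_interleave (card I) I \<psi> (\<lambda>_. 1)"

definition spike :: "nat \<Rightarrow> 'a::ring_1 \<Rightarrow> nat \<Rightarrow> 'a" where
  "spike k x = (\<lambda>i. if i = k then x else 1)"

lemma sym_interleave_cong: "(\<And>i. i \<in> I \<Longrightarrow> \<psi> i = \<psi>' i) \<Longrightarrow> sym_interleave n I \<psi> g = sym_interleave n I \<psi>' g"
proof (induction n arbitrary: I g)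
  case 0 then show ?case by simp
next
  case (Suc n)
  have "\<And>i. i \<in> I \<Longrightarrow> sym_interleave n (I - {i}) \<psi> (\<lambda>k. g (Suc k)) = sym_interleave n (I - {i}) \<psi>' (\<lambda>k. g (Suc k))"
    by (rule Suc.IH) (use Suc.prems in auto)
  then show ?case unfolding sym_interleave.simps
    by (intro sum.cong refl) (simp add: Suc.prems)
qed

lemma mult_sym_interleave: "x * sym_interleave n I \<psi> g = sym_interleave n I \<psi> (g(0 := x * g 0))"
proof (cases n)
  case 0 then show ?thesis by simp
next
  case (Suc m)
  have e: "(\<lambda>k. (g(0 := x * g 0)) (Suc k)) = (\<lambda>k. g (Suc k))" by auto
  show ?thesis unfolding Suc sym_interleave.simps e
    by (simp add: sum_distrib_left mult.assoc)
qed

lemma sym_interleave_mult: "sym_interleave n I \<psi> g * x = sym_interleave n I \<psi> (g(n := g n * x))"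
proof (induction n arbitrary: I g)
  case 0 then show ?case by simp
next
  case (Suc n)
  have e: "(\<lambda>k. (g(Suc n := g (Suc n) * x)) (Suc k)) = (\<lambda>k. g (Suc k))(n := g (Suc n) * x)" by auto
  have "\<And>i. sym_interleave n (I - {i}) \<psi> (\<lambda>k. g (Suc k)) * x = sym_interleave n (I - {i}) \<psi> ((\<lambda>k. g (Suc k))(n := g (Suc n) * x))"
    using Suc.IH[of "I - {_}" "\<lambda>k. g (Suc k)"] by (simp add: fun_upd_def)
  then show ?case unfolding sym_interleave.simps e
    by (simp add: sum_distrib_right mult.assoc)
qed

lemma sym_interleave_Suc_insert:
  assumes "finite I" "a \<notin> I"
  shows "sym_interleave (Suc n) (insert a I) \<psi> (\<lambda>_. 1)
       = \<psi> a * sym_interleave n I \<psi> (\<lambda>_. 1)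
         + (\<Sum>i\<in>I. \<psi> i * sym_interleave n (insert a (I - {i})) \<psi> (\<lambda>_. 1))"
proof -
  have "insert a I - {a} = I" using assms by auto
  moreover have "\<And>i. i \<in> I \<Longrightarrow> insert a I - {i} = insert a (I - {i})" using assms by auto
  ultimately show ?thesis
    using assms by (simp add: sum.insert_remove cong: sum.cong)
qed

lemma sym_interleave_insert:
  assumes "finite I" "a \<notin> I" "card I = n"
  shows "sym_interleave (Suc n) (insert a I) \<psi> (\<lambda>_. 1)
       = (\<Sum>k\<le>n. sym_interleave n I \<psi> (spike k (\<psi> a)))"
  using assms
proof (induction n arbitrary: I)
  case 0
  then have "I = {}" by simp
  then show ?case by (simp add: spike_def)
next
  case (Suc n)
  have a_first: "\<psi> a * sym_interleave (Suc n) I \<psi> (\<lambda>_. 1) = sym_interleave (Suc n) I \<psi> (spike 0 (\<psi> a))"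
  proof -
    have "((\<lambda>_. 1)(0 := \<psi> a * 1)) = spike 0 (\<psi> a)" by (auto simp: spike_def)
    then show ?thesis using mult_sym_interleave[of "\<psi> a" "Suc n" I \<psi> "\<lambda>_. 1"] by simp
  qed
  have IH: "\<And>i. i \<in> I \<Longrightarrow> sym_interleave (Suc n) (insert a (I - {i})) \<psi> (\<lambda>_. 1)
      = (\<Sum>k\<le>n. sym_interleave n (I - {i}) \<psi> (spike k (\<psi> a)))"
    using Suc.prems by (intro Suc.IH) auto
  have "(\<Sum>i\<in>I. \<psi> i * sym_interleave (Suc n) (insert a (I - {i})) \<psi> (\<lambda>_. 1))
      = (\<Sum>i\<in>I. \<Sum>k\<le>n. \<psi> i * sym_interleave n (I - {i}) \<psi> (spike k (\<psi> a)))"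
    by (intro sum.cong refl) (simp only: IH sum_distrib_left)
  also have "\<dots> = (\<Sum>k\<le>n. \<Sum>i\<in>I. \<psi> i * sym_interleave n (I - {i}) \<psi> (spike k (\<psi> a)))"
    by (rule sum.swap)
  also have "\<dots> = (\<Sum>k\<le>n. sym_interleave (Suc n) I \<psi> (spike (Suc k) (\<psi> a)))"
  proof -
    have "\<And>k. (\<lambda>j. spike (Suc k) (\<psi> a) (Suc j)) = spike k (\<psi> a)" "\<And>k. spike (Suc k) (\<psi> a) 0 = 1"
      by (auto simp: spike_def)
    then show ?thesis by simp
  qed
  finally have a_later: "(\<Sum>i\<in>I. \<psi> i * sym_interleave (Suc n) (insert a (I - {i})) \<psi> (\<lambda>_. 1))
      = (\<Sum>k\<le>n. sym_interleave (Suc n) I \<psi> (spike (Suc k) (\<psi> a)))" .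
  show ?case
    unfolding sym_interleave_Suc_insert[OF Suc.prems(1,2)] a_first a_later
    by (simp only: sum.atMost_Suc_shift)
qed

lemma sum_upd_sym_interleave_remove:
  assumes "finite I" "i \<in> I"
  shows "(\<Sum>j\<in>I. c * (\<psi>(j := u j)) i * sym_interleave n (I - {i}) (\<psi>(j := u j)) g)
       = c * u i * sym_interleave n (I - {i}) \<psi> g
         + c * \<psi> i * (\<Sum>j\<in>I - {i}. sym_interleave n (I - {i}) (\<psi>(j := u j)) g)"
proof -
  have "sym_interleave n (I - {i}) (\<psi>(i := u i)) g = sym_interleave n (I - {i}) \<psi> g"
    by (rule sym_interleave_cong) auto
  moreover have "(\<Sum>j\<in>I - {i}. c * (\<psi>(j := u j)) i * sym_interleave n (I - {i}) (\<psi>(j := u j)) g)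
      = c * \<psi> i * (\<Sum>j\<in>I - {i}. sym_interleave n (I - {i}) (\<psi>(j := u j)) g)"
    by (subst sum_distrib_left) (rule sum.cong; auto)
  ultimately show ?thesis
    by (simp add: sum.remove[OF assms])
qed

lemma sum_sym_interleave_scale_left:
  assumes "finite I" "card I = n"
  shows "(\<Sum>j\<in>I. sym_interleave n I (\<psi>(j := X * \<psi> j)) g)
       = (\<Sum>h<n. sym_interleave n I \<psi> (g(h := g h * X)))"
  using assms
proof (induction n arbitrary: I g)
  case 0
  then show ?case by simp
next
  case (Suc n)
  let ?gs = "\<lambda>k. g (Suc k)"
  have inner: "(\<Sum>j\<in>I. g 0 * (\<psi>(j := X * \<psi> j)) i * sym_interleave n (I - {i}) (\<psi>(j := X * \<psi> j)) ?gs)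
     = g 0 * X * \<psi> i * sym_interleave n (I - {i}) \<psi> ?gs
       + (\<Sum>h<n. g 0 * \<psi> i * sym_interleave n (I - {i}) \<psi> (?gs(h := ?gs h * X)))" if i: "i \<in> I" for i
  proof -
    have "finite (I - {i})" "card (I - {i}) = n" using Suc.prems i by auto
    have "(\<Sum>j\<in>I. g 0 * (\<psi>(j := X * \<psi> j)) i * sym_interleave n (I - {i}) (\<psi>(j := X * \<psi> j)) ?gs)
        = g 0 * (X * \<psi> i) * sym_interleave n (I - {i}) \<psi> ?gs
          + g 0 * \<psi> i * (\<Sum>j\<in>I - {i}. sym_interleave n (I - {i}) (\<psi>(j := X * \<psi> j)) ?gs)"
      by (rule sum_upd_sym_interleave_remove[OF \<open>finite I\<close> i])
    also have "(\<Sum>j\<in>I - {i}. sym_interleave n (I - {i}) (\<psi>(j := X * \<psi> j)) ?gs)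
        = (\<Sum>h<n. sym_interleave n (I - {i}) \<psi> (?gs(h := ?gs h * X)))"
      by (rule Suc.IH) fact+
    finally show ?thesis by (simp only: sum_distrib_left mult.assoc)
  qed
  have "(\<Sum>j\<in>I. sym_interleave (Suc n) I (\<psi>(j := X * \<psi> j)) g)
      = (\<Sum>i\<in>I. \<Sum>j\<in>I. g 0 * (\<psi>(j := X * \<psi> j)) i * sym_interleave n (I - {i}) (\<psi>(j := X * \<psi> j)) ?gs)"
    by (simp only: sym_interleave.simps) (rule sum.swap)
  also have "\<dots> = (\<Sum>i\<in>I. g 0 * X * \<psi> i * sym_interleave n (I - {i}) \<psi> ?gs)
      + (\<Sum>h<n. \<Sum>i\<in>I. g 0 * \<psi> i * sym_interleave n (I - {i}) \<psi> (?gs(h := ?gs h * X)))"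
    by (simp only: inner sum.distrib cong: sum.cong) (simp only: sum.swap[of _ I])
  also have "\<dots> = sym_interleave (Suc n) I \<psi> (g(0 := g 0 * X))
      + (\<Sum>h<n. sym_interleave (Suc n) I \<psi> (g(Suc h := g (Suc h) * X)))"
  proof -
    have "\<And>h. (\<lambda>k. (g(Suc h := g (Suc h) * X)) (Suc k)) = ?gs(h := ?gs h * X)"
         "(\<lambda>k. (g(0 := g 0 * X)) (Suc k)) = ?gs"
      by auto
    then show ?thesis by simp
  qed
  finally show ?case by (simp only: sum.lessThan_Suc_shift)
qed

lemma sum_sym_interleave_scale_right:
  assumes "finite I" "card I = n"
  shows "(\<Sum>j\<in>I. sym_interleave n I (\<psi>(j := \<psi> j * X)) g)
       = (\<Sum>h<n. sym_interleave n I \<psi> (g(Suc h := X * g (Suc h))))"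
  using assms
proof (induction n arbitrary: I g)
  case 0
  then show ?case by simp
next
  case (Suc n)
  let ?gs = "\<lambda>k. g (Suc k)"
  have inner: "(\<Sum>j\<in>I. g 0 * (\<psi>(j := \<psi> j * X)) i * sym_interleave n (I - {i}) (\<psi>(j := \<psi> j * X)) ?gs)
     = g 0 * \<psi> i * sym_interleave n (I - {i}) \<psi> (?gs(0 := X * ?gs 0))
       + (\<Sum>h<n. g 0 * \<psi> i * sym_interleave n (I - {i}) \<psi> (?gs(Suc h := X * ?gs (Suc h))))"
    if i: "i \<in> I" for i
  proof -
    have "finite (I - {i})" "card (I - {i}) = n" using Suc.prems i by auto
    have "(\<Sum>j\<in>I. g 0 * (\<psi>(j := \<psi> j * X)) i * sym_interleave n (I - {i}) (\<psi>(j := \<psi> j * X)) ?gs)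
        = g 0 * (\<psi> i * X) * sym_interleave n (I - {i}) \<psi> ?gs
          + g 0 * \<psi> i * (\<Sum>j\<in>I - {i}. sym_interleave n (I - {i}) (\<psi>(j := \<psi> j * X)) ?gs)"
      by (rule sum_upd_sym_interleave_remove[OF \<open>finite I\<close> i])
    also have "(\<Sum>j\<in>I - {i}. sym_interleave n (I - {i}) (\<psi>(j := \<psi> j * X)) ?gs)
        = (\<Sum>h<n. sym_interleave n (I - {i}) \<psi> (?gs(Suc h := X * ?gs (Suc h))))"
      by (rule Suc.IH) fact+
    finally show ?thesis
      by (simp only: sum_distrib_left mult.assoc mult_sym_interleave[of X])
  qed
  have "(\<Sum>j\<in>I. sym_interleave (Suc n) I (\<psi>(j := \<psi> j * X)) g)
      = (\<Sum>i\<in>I. \<Sum>j\<in>I. g 0 * (\<psi>(j := \<psi> j * X)) i * sym_interleave n (I - {i}) (\<psi>(j := \<psi> j * X)) ?gs)"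
    by (simp only: sym_interleave.simps) (rule sum.swap)
  also have "\<dots> = (\<Sum>i\<in>I. g 0 * \<psi> i * sym_interleave n (I - {i}) \<psi> (?gs(0 := X * ?gs 0)))
      + (\<Sum>h<n. \<Sum>i\<in>I. g 0 * \<psi> i * sym_interleave n (I - {i}) \<psi> (?gs(Suc h := X * ?gs (Suc h))))"
    by (simp only: inner sum.distrib cong: sum.cong) (simp only: sum.swap[of _ I])
  also have "\<dots> = sym_interleave (Suc n) I \<psi> (g(Suc 0 := X * g (Suc 0)))
      + (\<Sum>h<n. sym_interleave (Suc n) I \<psi> (g(Suc (Suc h) := X * g (Suc (Suc h)))))"
  proof -
    have "\<And>h. (\<lambda>k. (g(Suc (Suc h) := X * g (Suc (Suc h)))) (Suc k)) = ?gs(Suc h := X * ?gs (Suc h))"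
         "(\<lambda>k. (g(Suc 0 := X * g (Suc 0))) (Suc k)) = ?gs(0 := X * ?gs 0)"
      by auto
    then show ?thesis by simp
  qed
  finally show ?case by (simp only: sum.lessThan_Suc_shift)
qed

lemma sum_square_last_column:
  fixes F :: "nat \<Rightarrow> nat \<Rightarrow> 'a::ab_group_add"
  shows "(\<Sum>k\<le>n. \<Sum>h\<le>n. F k h) = (\<Sum>k\<le>n. F k n) + (\<Sum>k\<le>n. \<Sum>h<n. F k h)"
proof -
  have "(\<Sum>h\<le>n. F k h) = F k n + (\<Sum>h<n. F k h)" for k
    using sum.lessThan_Suc[of "F k" n] by (simp only: lessThan_Suc_atMost add.commute)
  then show ?thesis by (simp only: sum.distrib)
qed

lemma sum_square_first_row:
  fixes F :: "nat \<Rightarrow> nat \<Rightarrow> 'a::ab_group_add"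
  shows "(\<Sum>k\<le>n. \<Sum>h\<le>n. F k h) = (\<Sum>k\<le>n. F 0 k) + (\<Sum>k\<le>n. \<Sum>h<n. F (Suc h) k)"
proof -
  have "(\<Sum>k\<le>n. \<Sum>h\<le>n. F k h) = (\<Sum>h\<le>n. F 0 h) + (\<Sum>k<n. \<Sum>h\<le>n. F (Suc k) h)"
    by (rule sum.atMost_shift)
  also have "(\<Sum>k<n. \<Sum>h\<le>n. F (Suc k) h) = (\<Sum>h\<le>n. \<Sum>k<n. F (Suc k) h)"
    by (rule sum.swap)
  finally show ?thesis .
qed

lemma cancel_ab_group_add:
  fixes a1 a2 b1 b2 c x y :: "'a::ab_group_add"
  assumes "c + x = a1 + a2" "c + y = b1 + b2"
  shows "b1 = a1 + a2 - x - b2 + y"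
proof -
  have "x = a1 + a2 - c" "y = b1 + b2 - c" using assms by (simp_all add: eq_diff_eq add.commute)
  then show ?thesis by simp
qed

lemma sum_square_boundary:
  fixes A B :: "nat \<Rightarrow> nat \<Rightarrow> 'a::ab_group_add"
  assumes "\<And>h. A 0 h = B 0 h"
  shows "(\<Sum>k\<le>n. B k n) = (\<Sum>k\<le>n. A k n) + (\<Sum>k\<le>n. \<Sum>h<n. A k h) - (\<Sum>k\<le>n. \<Sum>h<n. A (Suc h) k)
           - (\<Sum>k\<le>n. \<Sum>h<n. B k h) + (\<Sum>k\<le>n. \<Sum>h<n. B (Suc h) k)"
proof (rule cancel_ab_group_add)
  have "(\<Sum>k\<le>n. B 0 k) = (\<Sum>k\<le>n. A 0 k)" using assms by simp
  then show "(\<Sum>k\<le>n. B 0 k) + (\<Sum>k\<le>n. \<Sum>h<n. A (Suc h) k) = (\<Sum>k\<le>n. A k n) + (\<Sum>k\<le>n. \<Sum>h<n. A k h)"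
    using sum_square_last_column[of A n] sum_square_first_row[of A n] by metis
  show "(\<Sum>k\<le>n. B 0 k) + (\<Sum>k\<le>n. \<Sum>h<n. B (Suc h) k) = (\<Sum>k\<le>n. B k n) + (\<Sum>k\<le>n. \<Sum>h<n. B k h)"
    using sum_square_last_column[of B n] sum_square_first_row[of B n] by metis
qed

lemma sym_prod_insert:
  assumes "finite J" "a \<notin> J"
  shows "sym_prod (insert a J) \<psi> = (\<Sum>k\<le>card J. sym_interleave (card J) J \<psi> (spike k (\<psi> a)))"
  unfolding sym_prod_def card_insert_disjoint[OF assms] by (rule sym_interleave_insert[OF assms refl])

lemma sym_prod_insert_cong:
  assumes "finite J" "a \<notin> J" "\<And>i. i \<in> J \<Longrightarrow> \<psi> i = \<phi> i"
  shows "sym_prod (insert a J) \<psi> = (\<Sum>k\<le>card J. sym_interleave (card J) J \<phi> (spike k (\<psi> a)))"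
  unfolding sym_prod_insert[OF assms(1,2)] by (intro sum.cong refl sym_interleave_cong) (simp add: assms(3))

lemma sym_prod_insert_mult:
  assumes "finite J" "a \<notin> J"
  shows "sym_prod (insert a J) (\<phi>(a := c)) * N
       = (\<Sum>k\<le>card J. sym_interleave (card J) J \<phi> ((spike k c)(card J := spike k c (card J) * N)))"
proof -
  have "sym_prod (insert a J) (\<phi>(a := c)) = (\<Sum>k\<le>card J. sym_interleave (card J) J \<phi> (spike k c))"
    using assms by (subst sym_prod_insert_cong[OF assms, of _ \<phi>]) auto
  then show ?thesis by (simp add: sum_distrib_right sym_interleave_mult)
qed

lemma sum_sym_prod_insert_scale_left:
  assumes J: "finite J" "a \<notin> J"
  shows "(\<Sum>j\<in>J. sym_prod (insert a J) (\<phi>(a := c, j := N * \<phi> j)))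
       = (\<Sum>k\<le>card J. \<Sum>h<card J. sym_interleave (card J) J \<phi> ((spike k c)(h := spike k c h * N)))"
proof -
  have "sym_prod (insert a J) (\<phi>(a := c, j := N * \<phi> j))
      = (\<Sum>k\<le>card J. sym_interleave (card J) J (\<phi>(j := N * \<phi> j)) (spike k c))" if "j \<in> J" for j
    using J that by (subst sym_prod_insert_cong[OF J, of _ "\<phi>(j := N * \<phi> j)"]) auto
  then have "(\<Sum>j\<in>J. sym_prod (insert a J) (\<phi>(a := c, j := N * \<phi> j)))
      = (\<Sum>k\<le>card J. \<Sum>j\<in>J. sym_interleave (card J) J (\<phi>(j := N * \<phi> j)) (spike k c))"
    by (simp add: sum.swap[of _ J])
  also have "\<dots> = (\<Sum>k\<le>card J. \<Sum>h<card J. sym_interleave (card J) J \<phi> ((spike k c)(h := spike k c h * N)))"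
    by (intro sum.cong refl sum_sym_interleave_scale_left J(1))
  finally show ?thesis .
qed

lemma sum_sym_prod_insert_scale_right:
  assumes J: "finite J" "a \<notin> J"
  shows "(\<Sum>j\<in>J. sym_prod (insert a J) (\<phi>(a := N, j := \<phi> j * c)))
       = (\<Sum>k\<le>card J. \<Sum>h<card J.
            sym_interleave (card J) J \<phi> ((spike (Suc h) c)(k := spike (Suc h) c k * N)))"
proof -
  have "sym_prod (insert a J) (\<phi>(a := N, j := \<phi> j * c))
      = (\<Sum>k\<le>card J. sym_interleave (card J) J (\<phi>(j := \<phi> j * c)) (spike k N))" if "j \<in> J" for j
    using J that by (subst sym_prod_insert_cong[OF J, of _ "\<phi>(j := \<phi> j * c)"]) auto
  then have "(\<Sum>j\<in>J. sym_prod (insert a J) (\<phi>(a := N, j := \<phi> j * c)))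
      = (\<Sum>k\<le>card J. \<Sum>j\<in>J. sym_interleave (card J) J (\<phi>(j := \<phi> j * c)) (spike k N))"
    by (simp add: sum.swap[of _ J])
  also have "\<dots> = (\<Sum>k\<le>card J. \<Sum>h<card J. sym_interleave (card J) J \<phi> ((spike k N)(Suc h := c * spike k N (Suc h))))"
    by (intro sum.cong refl sum_sym_interleave_scale_right J(1))
  also have "\<dots> = (\<Sum>k\<le>card J. \<Sum>h<card J.
      sym_interleave (card J) J \<phi> ((spike (Suc h) c)(k := spike (Suc h) c k * N)))"
  proof -
    have "(spike k N)(Suc h := c * spike k N (Suc h)) = (spike (Suc h) c)(k := spike (Suc h) c k * N)"
      for k h
      by (auto simp: fun_eq_iff spike_def)
    then show ?thesis by simp
  qed
  finally show ?thesis .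
qed

lemma sym_prod_sandwich:
  fixes \<phi> :: "'i \<Rightarrow> 'a::ring_1"
  assumes J: "finite J" "a \<notin> J"
  shows "M * sym_prod (insert a J) \<phi> * N =
     sym_prod (insert a J) (\<phi>(a := M * \<phi> a)) * N
   + (\<Sum>j\<in>J. sym_prod (insert a J) (\<phi>(a := M * \<phi> a, j := N * \<phi> j)))
   - (\<Sum>j\<in>J. sym_prod (insert a J) (\<phi>(a := N, j := \<phi> j * (M * \<phi> a))))
   - (\<Sum>j\<in>J. M * sym_prod (insert a J) (\<phi>(j := N * \<phi> j)))
   + (\<Sum>j\<in>J. M * sym_prod (insert a J) (\<phi>(a := N, j := \<phi> j * \<phi> a)))"
proof -
  define n where "n = card J"
  define A where "A k h = sym_interleave n J \<phi> ((spike k (M * \<phi> a))(h := spike k (M * \<phi> a) h * N))"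
    for k h
  define B where "B k h = M * sym_interleave n J \<phi> ((spike k (\<phi> a))(h := spike k (\<phi> a) h * N))"
    for k h
  have "A 0 h = B 0 h" for h
  proof -
    have "(spike 0 (M * \<phi> a))(h := spike 0 (M * \<phi> a) h * N)
        = ((spike 0 (\<phi> a))(h := spike 0 (\<phi> a) h * N))(0 := M * ((spike 0 (\<phi> a))(h := spike 0 (\<phi> a) h * N)) 0)"
      by (auto simp: fun_eq_iff spike_def mult.assoc)
    then show ?thesis by (simp add: A_def B_def mult_sym_interleave)
  qed
  then have "(\<Sum>k\<le>n. B k n) = (\<Sum>k\<le>n. A k n) + (\<Sum>k\<le>n. \<Sum>h<n. A k h) - (\<Sum>k\<le>n. \<Sum>h<n. A (Suc h) k)
           - (\<Sum>k\<le>n. \<Sum>h<n. B k h) + (\<Sum>k\<le>n. \<Sum>h<n. B (Suc h) k)"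
    by (rule sum_square_boundary)
  moreover have "M * sym_prod (insert a J) \<phi> * N = (\<Sum>k\<le>n. B k n)"
    using sym_prod_insert_mult[OF J, of \<phi> "\<phi> a" N]
    by (simp add: B_def n_def mult.assoc sum_distrib_left)
  moreover have "sym_prod (insert a J) (\<phi>(a := M * \<phi> a)) * N = (\<Sum>k\<le>n. A k n)"
    by (simp add: A_def n_def sym_prod_insert_mult[OF J])
  moreover have "(\<Sum>j\<in>J. sym_prod (insert a J) (\<phi>(a := M * \<phi> a, j := N * \<phi> j)))
      = (\<Sum>k\<le>n. \<Sum>h<n. A k h)"
    by (simp add: A_def n_def sum_sym_prod_insert_scale_left[OF J])
  moreover have "(\<Sum>j\<in>J. sym_prod (insert a J) (\<phi>(a := N, j := \<phi> j * (M * \<phi> a))))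
      = (\<Sum>k\<le>n. \<Sum>h<n. A (Suc h) k)"
    by (simp add: A_def n_def sum_sym_prod_insert_scale_right[OF J])
  moreover have "(\<Sum>j\<in>J. M * sym_prod (insert a J) (\<phi>(j := N * \<phi> j))) = (\<Sum>k\<le>n. \<Sum>h<n. B k h)"
    using sum_sym_prod_insert_scale_left[OF J, of \<phi> "\<phi> a" N]
    by (simp add: B_def n_def sum_distrib_left[symmetric])
  moreover have "(\<Sum>j\<in>J. M * sym_prod (insert a J) (\<phi>(a := N, j := \<phi> j * \<phi> a)))
      = (\<Sum>k\<le>n. \<Sum>h<n. B (Suc h) k)"
    using sum_sym_prod_insert_scale_right[OF J, of \<phi> N "\<phi> a"]
    by (simp add: B_def n_def sum_distrib_left[symmetric])
  ultimately show ?thesis by (simp only:)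
qed

lemma sym_prod_empty: "sym_prod {} \<psi> = 1"
  by (simp add: sym_prod_def)

lemma sym_prod_remove:
  assumes "finite K" "K \<noteq> {}"
  shows "sym_prod K \<psi> = (\<Sum>b\<in>K. \<psi> b * sym_prod (K - {b}) \<psi>)"
proof -
  obtain m where m: "card K = Suc m" using assms by (cases "card K") auto
  have "\<And>b. b \<in> K \<Longrightarrow> card (K - {b}) = m" using m assms by simp
  then show ?thesis unfolding sym_prod_def m by (simp cong: sum.cong)
qed

lemma sym_interleave_image:
  "inj_on f I \<Longrightarrow> sym_interleave n (f ` I) \<psi> g = sym_interleave n I (\<psi> \<circ> f) g"
proof (induction n arbitrary: I g)
  case 0 then show ?case by simp
next
  case (Suc n)
  have "\<And>i. i \<in> I \<Longrightarrow> f ` I - {f i} = f ` (I - {i})" using Suc.prems by (auto simp: inj_on_def)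
  moreover have "\<And>i. i \<in> I \<Longrightarrow> sym_interleave n (f ` (I - {i})) \<psi> (\<lambda>k. g (Suc k))
      = sym_interleave n (I - {i}) (\<psi> \<circ> f) (\<lambda>k. g (Suc k))"
    using Suc.prems by (intro Suc.IH) (auto intro: inj_on_subset)
  ultimately show ?case
    by (simp only: sym_interleave.simps sum.reindex[OF Suc.prems]) (intro sum.cong refl, simp)
qed

lemma sym_prod_image: "inj_on f I \<Longrightarrow> sym_prod (f ` I) \<psi> = sym_prod I (\<psi> \<circ> f)"
  by (simp add: sym_prod_def sym_interleave_image card_image)

lemma image_transpose_remove:
  assumes "a \<notin> A" "b \<in> insert a A"
  shows "transpose a b ` A = insert a A - {b}"
proof (cases "b = a")
  case True then show ?thesis using assms by auto
next
  case False then show ?thesis using assms by (auto simp: transpose_def image_iff)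
qed

lemma sum_permutes_eq_sym_prod:
  fixes \<psi> :: "'i \<Rightarrow> 'a::ring_1"
  assumes "distinct L"
  shows "(\<Sum>\<sigma>\<in>{\<sigma>. \<sigma> permutes set L}. prod_list (map (\<lambda>i. \<psi> (\<sigma> i)) L)) = sym_prod (set L) \<psi>"
  using assms
proof (induction L arbitrary: \<psi>)
  case Nil
  have "{\<sigma>. \<sigma> permutes ({}::'i set)} = {id}" by auto
  then show ?case by (simp add: sym_prod_empty)
next
  case (Cons a L)
  have aL: "a \<notin> set L" "distinct L" using Cons.prems by auto
  have "(\<Sum>q\<in>{q. q permutes set L}. prod_list (map (\<lambda>i. \<psi> ((transpose a b \<circ> q) i)) (a # L)))
      = \<psi> b * sym_prod (insert a (set L) - {b}) \<psi>" if b: "b \<in> insert a (set L)" for b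
  proof -
    have fix_a: "q a = a" if "q permutes set L" for q using that aL(1) by (simp add: permutes_not_in)
    have "(\<Sum>q\<in>{q. q permutes set L}. prod_list (map (\<lambda>i. \<psi> ((transpose a b \<circ> q) i)) (a # L)))
        = \<psi> b * (\<Sum>q\<in>{q. q permutes set L}. prod_list (map (\<lambda>i. (\<psi> \<circ> transpose a b) (q i)) L))"
      unfolding sum_distrib_left by (rule sum.cong) (simp_all add: fix_a)
    also have "\<dots> = \<psi> b * sym_prod (transpose a b ` set L) \<psi>"
      by (simp only: Cons.IH[OF aL(2)] sym_prod_image inj_on_transpose)
    finally show ?thesis by (simp only: image_transpose_remove[OF aL(1) b])
  qed
  then show ?case
    by (simp add: sum_over_permutations_insert[OF finite_set aL(1)] sym_prod_remove[of "insert a (set L)"])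
qed

section \<open>The free algebra as a ring\<close>

lemma splits_eq_take_drop: "{(u,v). u @ v = w} = (\<lambda>i. (take i w, drop i w)) ` {..length w}"
proof
  show "{(u,v). u @ v = w} \<subseteq> (\<lambda>i. (take i w, drop i w)) ` {..length w}"
  proof (rule subsetI)
    fix p assume "p \<in> {(u,v). u @ v = w}"
    then obtain u v where p: "p = (u,v)" "u @ v = w" by auto
    then show "p \<in> (\<lambda>i. (take i w, drop i w)) ` {..length w}"
      by (intro image_eqI[of _ _ "length u"]) auto
  qed
  show "(\<lambda>i. (take i w, drop i w)) ` {..length w} \<subseteq> {(u,v). u @ v = w}" by auto
qed

lemma finite_splits: "finite {(u,v). u @ v = (w::'a list)}"
  unfolding splits_eq_take_drop by simp

lemma finite_splits_fst_snd: "finite {p. fst p @ snd p = (w::'a list)}"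
  using finite_splits[of w] by (simp add: split_def)

lemma inj_on_take_drop: "inj_on (\<lambda>i. (take i w, drop i w)) {..length w}"
  by (auto simp: inj_on_def) (metis length_take min.absorb2)

lemma fa_mult_splits: "fa_mult f g w = (\<Sum>p\<in>{(u,v). u @ v = w}. f (fst p) * g (snd p))"
  unfolding fa_mult_def splits_eq_take_drop by (simp add: sum.reindex[OF inj_on_take_drop])

lemma fa_mult_assoc: "fa_mult (fa_mult f g) h = fa_mult f (fa_mult g h)"
proof (rule ext)
  fix w
  have "fa_mult (fa_mult f g) h w = (\<Sum>p\<in>{(x,y). x @ y = w}. \<Sum>q\<in>{(u,v). u @ v = fst p}. f (fst q) * g (snd q) * h (snd p))"
    by (simp add: fa_mult_splits sum_distrib_right)
  also have "\<dots> = (\<Sum>pq\<in>(SIGMA p:{(x,y). x @ y = w}. {(u,v). u @ v = fst p}). f (fst (snd pq)) * g (snd (snd pq)) * h (snd (fst pq)))"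
    by (subst sum.Sigma) (auto simp: finite_splits finite_splits_fst_snd split_def)
  also have "\<dots> = (\<Sum>pq\<in>(SIGMA p:{(u,z). u @ z = w}. {(v,y). v @ y = snd p}). f (fst (fst pq)) * (g (fst (snd pq)) * h (snd (snd pq))))"
    by (rule sum.reindex_bij_witness[where i="\<lambda>((u,z),(v,y)). ((u @ v, y), (u, v))" and j="\<lambda>((x,y),(u,v)). ((u, v @ y), (v, y))"])
       (auto simp: mult.assoc)
  also have "\<dots> = (\<Sum>p\<in>{(u,z). u @ z = w}. \<Sum>q\<in>{(v,y). v @ y = snd p}. f (fst p) * (g (fst q) * h (snd q)))"
    by (subst sum.Sigma) (auto simp: finite_splits finite_splits_fst_snd split_def)
  also have "\<dots> = fa_mult f (fa_mult g h) w"
    by (simp add: fa_mult_splits sum_distrib_left)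
  finally show "fa_mult (fa_mult f g) h w = fa_mult f (fa_mult g h) w" .
qed

lemma fa_mult_one_left: "fa_mult (fa_mono []) f = f"
proof (rule ext)
  fix w
  have "fa_mult (fa_mono []) f w = (\<Sum>i\<le>length w. if i = 0 then f w else 0)"
    unfolding fa_mult_def fa_mono_def by (intro sum.cong refl) auto
  then show "fa_mult (fa_mono []) f w = f w" by simp
qed

lemma fa_mult_one_right: "fa_mult f (fa_mono []) = f"
proof (rule ext)
  fix w
  have "fa_mult f (fa_mono []) w = (\<Sum>i\<le>length w. if i = length w then f w else 0)"
    unfolding fa_mult_def fa_mono_def by (intro sum.cong refl) auto
  then show "fa_mult f (fa_mono []) w = f w" by simp
qed

lemma fa_mult_add_left: "fa_mult (fa_add f g) h = fa_add (fa_mult f h) (fa_mult g h)"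
  by (auto simp: fun_eq_iff fa_mult_def fa_add_def sum.distrib ring_distribs)

lemma fa_mult_add_right: "fa_mult h (fa_add f g) = fa_add (fa_mult h f) (fa_mult h g)"
  by (auto simp: fun_eq_iff fa_mult_def fa_add_def sum.distrib ring_distribs)

lemma fa_mult_zero_left: "fa_mult fa_zero g = fa_zero"
  by (simp add: fun_eq_iff fa_mult_def fa_zero_def)
lemma fa_mult_zero_right: "fa_mult f fa_zero = fa_zero"
  by (simp add: fun_eq_iff fa_mult_def fa_zero_def)
lemma fa_mult_smult_left: "fa_mult (fa_smult c f) g = fa_smult c (fa_mult f g)"
  by (simp add: fun_eq_iff fa_mult_def fa_smult_def sum_distrib_left mult.assoc)
lemma fa_mult_smult_right: "fa_mult f (fa_smult c g) = fa_smult c (fa_mult f g)"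
  by (simp add: fun_eq_iff fa_mult_def fa_smult_def sum_distrib_left mult.left_commute)
lemma fa_add_zero_left: "fa_add fa_zero f = f" by (simp add: fun_eq_iff fa_add_def fa_zero_def)
lemma fa_add_zero_right: "fa_add f fa_zero = f" by (simp add: fun_eq_iff fa_add_def fa_zero_def)

text \<open>A copy of \<open>fa\<close> with the ring structure of the unital algebra \<open>k\<langle>X\<rangle>\<close>, so that the
  identities of the previous section apply to it; \<open>k\<^sub>0\<langle>X\<rangle>\<close> is the part \<open>in_FA\<close>.\<close>

typedef ('k::field) falg = "UNIV :: 'k fa set" by auto

setup_lifting type_definition_falg

instantiation falg :: (field) ring_1
begin
lift_definition zero_falg :: "'a falg" is fa_zero .
lift_definition one_falg :: "'a falg" is "fa_mono []" .
lift_definition plus_falg :: "'a falg \<Rightarrow> 'a falg \<Rightarrow> 'a falg" is fa_add .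
lift_definition uminus_falg :: "'a falg \<Rightarrow> 'a falg" is "\<lambda>f w. - f w" .
lift_definition minus_falg :: "'a falg \<Rightarrow> 'a falg \<Rightarrow> 'a falg" is "\<lambda>f g w. f w - g w" .
lift_definition times_falg :: "'a falg \<Rightarrow> 'a falg \<Rightarrow> 'a falg" is fa_mult .
instance
proof
  fix a b c :: "'a falg"
  show "a + b + c = a + (b + c)" by transfer (simp add: fa_add_def add.assoc)
  show "a + b = b + a" by transfer (simp add: fa_add_def add.commute)
  show "0 + a = a" by transfer (simp add: fa_add_def fa_zero_def)
  show "- a + a = 0" by transfer (simp add: fa_add_def fa_zero_def)
  show "a - b = a + - b" by transfer (simp add: fa_add_def)
  show "a * b * c = a * (b * c)" by transfer (rule fa_mult_assoc)
  show "1 * a = a" by transfer (rule fa_mult_one_left)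
  show "a * 1 = a" by transfer (rule fa_mult_one_right)
  show "(a + b) * c = a * c + b * c" by transfer (rule fa_mult_add_left)
  show "a * (b + c) = a * b + a * c" by transfer (rule fa_mult_add_right)
  show "(0::'a falg) \<noteq> 1" by transfer (auto simp: fa_zero_def fa_mono_def fun_eq_iff)
qed
end

lift_definition scalar :: "'k::field \<Rightarrow> 'k falg" is "\<lambda>c w. if w = [] then c else 0" .
lift_definition monom :: "nat list \<Rightarrow> ('k::field) falg" is fa_mono .

lemma Rep_falg_add: "Rep_falg (x + y) = fa_add (Rep_falg x) (Rep_falg y)" by transfer simp
lemma Rep_falg_mult: "Rep_falg (x * y) = fa_mult (Rep_falg x) (Rep_falg y)" by transfer simp
lemma Rep_falg_zero: "Rep_falg 0 = fa_zero" by transfer simp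
lemma Rep_falg_minus: "Rep_falg (x - y) = (\<lambda>w. Rep_falg x w - Rep_falg y w)" by transfer simp
lemma Rep_falg_scalar_mult: "Rep_falg (scalar c * x) = fa_smult c (Rep_falg x)"
proof -
  have "fa_mult (\<lambda>w. if w = [] then c else 0) f = fa_smult c f" for f :: "'a fa"
  proof (rule ext)
    fix w
    have "fa_mult (\<lambda>w. if w = [] then c else 0) f w = (\<Sum>i\<le>length w. if i = 0 then c * f w else 0)"
      unfolding fa_mult_def by (intro sum.cong refl) auto
    then show "fa_mult (\<lambda>w. if w = [] then c else 0) f w = fa_smult c f w" by (simp add: fa_smult_def)
  qed
  then show ?thesis by transfer simp
qed

lemma Rep_falg_mult_scalar: "Rep_falg (x * scalar c) = fa_smult c (Rep_falg x)"
proof -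
  have "fa_mult f (\<lambda>w. if w = [] then c else 0) = fa_smult c f" for f :: "'a fa"
  proof (rule ext)
    fix w
    have "fa_mult f (\<lambda>w. if w = [] then c else 0) w = (\<Sum>i\<le>length w. if i = length w then c * f w else 0)"
      unfolding fa_mult_def by (intro sum.cong refl) auto
    then show "fa_mult f (\<lambda>w. if w = [] then c else 0) w = fa_smult c f w" by (simp add: fa_smult_def)
  qed
  then show ?thesis by transfer simp
qed

lemma scalar_commute: "scalar c * x = x * scalar c"
  by (rule Rep_falg_inject[THEN iffD1]) (simp add: Rep_falg_scalar_mult Rep_falg_mult_scalar)

lemma scalar_add: "scalar (a + b) = scalar a + scalar b" by transfer (auto simp: fa_add_def)
lemma scalar_mult: "scalar (a * b) = scalar a * scalar b"
  by (rule Rep_falg_inject[THEN iffD1]) (auto simp: Rep_falg_scalar_mult scalar.rep_eq fa_smult_def fun_eq_iff)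
lemma scalar_zero: "scalar 0 = 0" by transfer (auto simp: fa_zero_def)
lemma scalar_one: "scalar 1 = 1" by transfer (auto simp: fa_mono_def)
lemma scalar_sum: "finite S \<Longrightarrow> scalar (\<Sum>x\<in>S. f x) = (\<Sum>x\<in>S. scalar (f x))"
  by (induction S rule: finite_induct) (auto simp: scalar_zero scalar_add)

lemma fa_mono_append: "fa_mono (u @ v) = (fa_mult (fa_mono u) (fa_mono v) :: ('k::field) fa)"
proof (rule ext)
  fix w
  show "fa_mono (u @ v) w = (fa_mult (fa_mono u) (fa_mono v) w :: 'k)"
    unfolding fa_mult_splits
    by (subst sum.cong[OF refl, where h = "\<lambda>p. if p = (u, v) then 1 else 0"];
        auto simp: fa_mono_def sum.delta[OF finite_splits])
qed

lemma FA_zero: "fa_zero \<in> FA" by (simp add: FA_def fa_zero_def)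

lemma FA_add: "f \<in> FA \<Longrightarrow> g \<in> FA \<Longrightarrow> fa_add f g \<in> FA"
proof -
  assume f: "f \<in> FA" and g: "g \<in> FA"
  have "{w. fa_add f g w \<noteq> 0} \<subseteq> {w. f w \<noteq> 0} \<union> {w. g w \<noteq> 0}" by (auto simp: fa_add_def)
  then show ?thesis using f g unfolding FA_def by (auto simp: fa_add_def intro: finite_subset)
qed

lemma FA_smult: "f \<in> FA \<Longrightarrow> fa_smult c f \<in> FA"
proof -
  assume f: "f \<in> FA"
  have "{w. fa_smult c f w \<noteq> 0} \<subseteq> {w. f w \<noteq> 0}" by (auto simp: fa_smult_def)
  then show ?thesis using f unfolding FA_def by (auto simp: fa_smult_def intro: finite_subset)
qed

lemma support_fa_mult:
  "{w. fa_mult f g w \<noteq> 0} \<subseteq> (\<lambda>(u, v). u @ v) ` ({u. f u \<noteq> 0} \<times> {v. g v \<noteq> 0})"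
proof
  fix w assume "w \<in> {w. fa_mult f g w \<noteq> 0}"
  then have "(\<Sum>p\<in>{(u,v). u @ v = w}. f (fst p) * g (snd p)) \<noteq> 0" by (simp add: fa_mult_splits)
  then obtain p where "p \<in> {(u,v). u @ v = w}" "f (fst p) * g (snd p) \<noteq> 0"
    by (meson sum.neutral)
  then show "w \<in> (\<lambda>(u, v). u @ v) ` ({u. f u \<noteq> 0} \<times> {v. g v \<noteq> 0})"
    by (intro image_eqI[of _ _ p]) auto
qed

lemma FA_mult:
  assumes "f \<in> FA" "g \<in> FA"
  shows "fa_mult f g \<in> FA"
proof -
  have "finite ((\<lambda>(u, v). u @ v) ` ({u. f u \<noteq> 0} \<times> {v. g v \<noteq> 0}))"
    using assms by (simp add: FA_def)
  moreover have "fa_mult f g [] = 0" using assms by (simp add: fa_mult_def FA_def)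
  ultimately show ?thesis
    using support_fa_mult[of f g] unfolding FA_def by (auto intro: finite_subset)
qed

lemma FA_mono: "L \<noteq> [] \<Longrightarrow> fa_mono L \<in> FA"
proof -
  assume "L \<noteq> []"
  moreover have "{w. fa_mono L w \<noteq> (0::'a::field)} = {L}" by (auto simp: fa_mono_def)
  ultimately show ?thesis by (auto simp: FA_def fa_mono_def)
qed

definition in_FA :: "('k::field) falg \<Rightarrow> bool" where "in_FA x \<longleftrightarrow> Rep_falg x \<in> FA"

lemma in_FA_zero: "in_FA 0" by (simp add: in_FA_def Rep_falg_zero FA_zero)
lemma in_FA_add: "in_FA x \<Longrightarrow> in_FA y \<Longrightarrow> in_FA (x + y)" by (simp add: in_FA_def Rep_falg_add FA_add)
lemma in_FA_mult: "in_FA x \<Longrightarrow> in_FA y \<Longrightarrow> in_FA (x * y)" by (simp add: in_FA_def Rep_falg_mult FA_mult)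
lemma in_FA_scalar_mult: "in_FA x \<Longrightarrow> in_FA (scalar c * x)" by (simp add: in_FA_def Rep_falg_scalar_mult FA_smult)
lemma in_FA_sum: "finite S \<Longrightarrow> (\<And>s. s \<in> S \<Longrightarrow> in_FA (x s)) \<Longrightarrow> in_FA (\<Sum>s\<in>S. x s)"
  by (induction S rule: finite_induct) (auto simp: in_FA_zero in_FA_add)
lemma in_FA_Abs_falg: "f \<in> FA \<Longrightarrow> in_FA (Abs_falg f)" by (simp add: in_FA_def Abs_falg_inverse)
lemma in_FA_monom: "L \<noteq> [] \<Longrightarrow> in_FA (monom L)" by (simp add: in_FA_def monom.rep_eq FA_mono)

lemma Rep_falg_sum: "finite S \<Longrightarrow> Rep_falg (\<Sum>s\<in>S. x s) w = (\<Sum>s\<in>S. Rep_falg (x s) w)"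
  by (induction S rule: finite_induct) (auto simp: Rep_falg_zero Rep_falg_add fa_zero_def fa_add_def)

lemma Abs_falg_add: "Abs_falg (fa_add f g) = Abs_falg f + Abs_falg g"
  by (metis Abs_falg_inverse Rep_falg_add Rep_falg_inverse UNIV_I)
lemma Abs_falg_mult: "Abs_falg (fa_mult f g) = Abs_falg f * Abs_falg g"
  by (metis Abs_falg_inverse Rep_falg_mult Rep_falg_inverse UNIV_I)
lemma Abs_falg_smult: "Abs_falg (fa_smult c f) = scalar c * Abs_falg f"
  by (metis Abs_falg_inverse Rep_falg_scalar_mult Rep_falg_inverse UNIV_I)

section \<open>Substitution endomorphisms and the images of \<open>S_poly\<close>\<close>

definition subst_word :: "(nat \<Rightarrow> ('k::field) falg) \<Rightarrow> nat list \<Rightarrow> 'k falg" where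
  "subst_word \<phi> w = prod_list (map \<phi> w)"

definition substitute :: "(nat \<Rightarrow> ('k::field) falg) \<Rightarrow> 'k falg \<Rightarrow> 'k falg" where
  "substitute \<phi> x = (\<Sum>w\<in>{w. Rep_falg x w \<noteq> 0}. scalar (Rep_falg x w) * subst_word \<phi> w)"

lemma substitute_eq_sum:
  assumes "finite S" "{w. Rep_falg x w \<noteq> 0} \<subseteq> S"
  shows "substitute \<phi> x = (\<Sum>w\<in>S. scalar (Rep_falg x w) * subst_word \<phi> w)"
  unfolding substitute_def by (rule sum.mono_neutral_left) (use assms in \<open>auto simp: scalar_zero\<close>)

lemma finite_support: "in_FA x \<Longrightarrow> finite {w. Rep_falg x w \<noteq> 0}" by (simp add: in_FA_def FA_def)

lemma substitute_add:
  assumes "in_FA x" "in_FA y"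
  shows "substitute \<phi> (x + y) = substitute \<phi> x + substitute \<phi> y"
proof -
  let ?S = "{w. Rep_falg x w \<noteq> 0} \<union> {w. Rep_falg y w \<noteq> 0}"
  have fin: "finite ?S" using assms by (simp add: finite_support)
  have "substitute \<phi> (x + y) = (\<Sum>w\<in>?S. scalar (Rep_falg (x + y) w) * subst_word \<phi> w)"
    by (rule substitute_eq_sum[OF fin]) (auto simp: Rep_falg_add fa_add_def)
  also have "\<dots> = (\<Sum>w\<in>?S. scalar (Rep_falg x w) * subst_word \<phi> w) + (\<Sum>w\<in>?S. scalar (Rep_falg y w) * subst_word \<phi> w)"
    by (simp add: Rep_falg_add fa_add_def scalar_add distrib_right sum.distrib)
  also have "\<dots> = substitute \<phi> x + substitute \<phi> y"
    by (simp add: substitute_eq_sum[OF fin, symmetric])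
  finally show ?thesis .
qed

lemma substitute_scalar_mult:
  assumes "in_FA x"
  shows "substitute \<phi> (scalar c * x) = scalar c * substitute \<phi> x"
proof -
  let ?S = "{w. Rep_falg x w \<noteq> 0}"
  have fin: "finite ?S" using assms by (simp add: finite_support)
  have "substitute \<phi> (scalar c * x) = (\<Sum>w\<in>?S. scalar (Rep_falg (scalar c * x) w) * subst_word \<phi> w)"
    by (rule substitute_eq_sum[OF fin]) (auto simp: Rep_falg_scalar_mult fa_smult_def)
  also have "\<dots> = scalar c * (\<Sum>w\<in>?S. scalar (Rep_falg x w) * subst_word \<phi> w)"
    by (simp add: Rep_falg_scalar_mult fa_smult_def scalar_mult sum_distrib_left mult.assoc)
  also have "\<dots> = scalar c * substitute \<phi> x" by (simp add: substitute_def)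
  finally show ?thesis .
qed

lemma subst_word_append: "subst_word \<phi> (u @ v) = subst_word \<phi> u * subst_word \<phi> v"
  by (simp add: subst_word_def)

lemma scalar_mult_subst_word:
  "scalar a * subst_word \<phi> u * (scalar b * subst_word \<phi> v) = scalar (a * b) * subst_word \<phi> (u @ v)"
proof -
  have "subst_word \<phi> u * (scalar b * subst_word \<phi> v) = scalar b * (subst_word \<phi> u * subst_word \<phi> v)"
    by (metis mult.assoc scalar_commute)
  then show ?thesis by (simp only: scalar_mult subst_word_append mult.assoc)
qed

lemma substitute_mult:
  assumes x: "in_FA x" and y: "in_FA y"
  shows "substitute \<phi> (x * y) = substitute \<phi> x * substitute \<phi> y"
proof -
  define Sx where "Sx = {w. Rep_falg x w \<noteq> 0}"
  define Sy where "Sy = {w. Rep_falg y w \<noteq> 0}"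
  have fx: "finite Sx" and fy: "finite Sy" using x y by (simp_all add: finite_support Sx_def Sy_def)
  define S where "S = (\<lambda>(u,v). u @ v) ` (Sx \<times> Sy)"
  have fS: "finite S" using fx fy by (simp add: S_def)
  have suppS: "{w. Rep_falg (x * y) w \<noteq> 0} \<subseteq> S"
    using support_fa_mult[of "Rep_falg x" "Rep_falg y"] by (simp add: Rep_falg_mult S_def Sx_def Sy_def)
  define G where "G = (\<lambda>p. scalar (Rep_falg x (fst p) * Rep_falg y (snd p)) * subst_word \<phi> (fst p @ snd p))"
  have "substitute \<phi> (x * y) = (\<Sum>w\<in>S. scalar (Rep_falg (x * y) w) * subst_word \<phi> w)"
    by (rule substitute_eq_sum[OF fS suppS])
  also have "\<dots> = (\<Sum>w\<in>S. \<Sum>p\<in>{p \<in> Sx \<times> Sy. (\<lambda>(u,v). u @ v) p = w}. G p)"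
  proof (rule sum.cong[OF refl])
    fix w assume "w \<in> S"
    have "scalar (Rep_falg (x * y) w) * subst_word \<phi> w = (\<Sum>p\<in>{(u,v). u @ v = w}. G p)"
      by (simp add: Rep_falg_mult fa_mult_splits scalar_sum sum_distrib_right G_def split_def finite_splits_fst_snd)
    also have "\<dots> = (\<Sum>p\<in>{p \<in> Sx \<times> Sy. (\<lambda>(u,v). u @ v) p = w}. G p)"
      by (rule sum.mono_neutral_right) (auto simp: finite_splits G_def Sx_def Sy_def scalar_zero)
    finally show "scalar (Rep_falg (x * y) w) * subst_word \<phi> w = (\<Sum>p\<in>{p \<in> Sx \<times> Sy. (\<lambda>(u,v). u @ v) p = w}. G p)" .
  qed
  also have "\<dots> = (\<Sum>p\<in>Sx \<times> Sy. G p)"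
    by (rule sum.group) (use fx fy in \<open>auto simp: S_def\<close>)
  also have "\<dots> = (\<Sum>u\<in>Sx. \<Sum>v\<in>Sy. G (u, v))"
    by (subst sum.cartesian_product) (simp add: split_def)
  also have "\<dots> = (\<Sum>u\<in>Sx. \<Sum>v\<in>Sy. scalar (Rep_falg x u) * subst_word \<phi> u * (scalar (Rep_falg y v) * subst_word \<phi> v))"
    by (simp only: G_def fst_conv snd_conv scalar_mult_subst_word)
  also have "\<dots> = substitute \<phi> x * substitute \<phi> y"
    by (simp only: substitute_def Sx_def Sy_def sum_product)
  finally show ?thesis .
qed

lemma in_FA_subst_word: "(\<And>i. in_FA (\<phi> i)) \<Longrightarrow> w \<noteq> [] \<Longrightarrow> in_FA (subst_word \<phi> w)"
proof (induction w)
  case Nil then show ?case by simp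
next
  case (Cons i w)
  then show ?case by (cases "w = []") (auto simp: subst_word_def in_FA_mult)
qed

lemma in_FA_substitute:
  assumes "\<And>i. in_FA (\<phi> i)" "in_FA x"
  shows "in_FA (substitute \<phi> x)"
proof -
  have "Rep_falg x [] = 0" using assms(2) by (simp add: in_FA_def FA_def)
  then show ?thesis unfolding substitute_def
  proof (intro in_FA_sum)
    fix w assume "Rep_falg x [] = 0" "w \<in> {w. Rep_falg x w \<noteq> 0}"
    then have "w \<noteq> []" by auto
    then show "in_FA (scalar (Rep_falg x w) * subst_word \<phi> w)" by (intro in_FA_scalar_mult in_FA_subst_word assms)
  qed (simp add: finite_support assms)
qed

lemma substitute_var: "substitute \<phi> (monom [i]) = \<phi> i"
proof -
  have "substitute \<phi> (monom [i]) = (\<Sum>w\<in>{[i]}. scalar (Rep_falg (monom [i]) w) * subst_word \<phi> w)"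
    by (rule substitute_eq_sum) (auto simp: monom.rep_eq fa_mono_def)
  then show ?thesis by (simp add: monom.rep_eq fa_mono_def scalar_one subst_word_def)
qed

definition subst_endo :: "(nat \<Rightarrow> ('k::field) falg) \<Rightarrow> 'k fa \<Rightarrow> 'k fa" where
  "subst_endo \<phi> f = Rep_falg (substitute \<phi> (Abs_falg f))"

lemma fa_endo_subst_endo:
  assumes "\<And>i. in_FA (\<phi> i)"
  shows "fa_endo (subst_endo \<phi>)"
  unfolding fa_endo_def
proof (intro conjI ballI allI)
  fix f :: "'a fa" assume "f \<in> FA"
  then show "subst_endo \<phi> f \<in> FA" using in_FA_substitute[OF assms in_FA_Abs_falg] by (simp add: subst_endo_def in_FA_def)
next
  fix f g :: "'a fa" assume "f \<in> FA" "g \<in> FA"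
  then show "subst_endo \<phi> (fa_add f g) = fa_add (subst_endo \<phi> f) (subst_endo \<phi> g)"
    by (simp add: subst_endo_def Abs_falg_add substitute_add in_FA_Abs_falg Rep_falg_add)
next
  fix c and f :: "'a fa" assume "f \<in> FA"
  then show "subst_endo \<phi> (fa_smult c f) = fa_smult c (subst_endo \<phi> f)"
    by (simp add: subst_endo_def Abs_falg_smult substitute_scalar_mult in_FA_Abs_falg Rep_falg_scalar_mult)
next
  fix f g :: "'a fa" assume "f \<in> FA" "g \<in> FA"
  then show "subst_endo \<phi> (fa_mult f g) = fa_mult (subst_endo \<phi> f) (subst_endo \<phi> g)"
    by (simp add: subst_endo_def Abs_falg_mult substitute_mult in_FA_Abs_falg Rep_falg_mult)
qed

lemma subst_endo_var: "subst_endo \<phi> (fa_mono [i]) = Rep_falg (\<phi> i)"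
  by (simp add: subst_endo_def monom.abs_eq[symmetric] substitute_var)

lemma fa_endo_zero:
  assumes "fa_endo h"
  shows "h fa_zero = fa_zero"
proof -
  have "h fa_zero = fa_add (h fa_zero) (h fa_zero)"
    using assms FA_zero unfolding fa_endo_def by (metis fa_add_zero_left)
  then have "h fa_zero w = 0" for w
    unfolding fa_add_def by (metis add_cancel_right_right)
  then show ?thesis by (simp add: fun_eq_iff fa_zero_def)
qed

lemma fa_endo_sum:
  assumes h: "fa_endo h" and "finite S" "\<And>s. s \<in> S \<Longrightarrow> in_FA (x s)"
  shows "Abs_falg (h (Rep_falg (\<Sum>s\<in>S. x s))) = (\<Sum>s\<in>S. Abs_falg (h (Rep_falg (x s))))"
  using assms(2,3)
proof (induction S rule: finite_induct)
  case empty
  then show ?case using fa_endo_zero[OF h] by (simp add: Rep_falg_zero) (metis Rep_falg_zero Rep_falg_inverse)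
next
  case (insert s S)
  have "Rep_falg (\<Sum>s\<in>insert s S. x s) = fa_add (Rep_falg (x s)) (Rep_falg (\<Sum>s\<in>S. x s))"
    using insert by (simp add: Rep_falg_add)
  moreover have "Rep_falg (x s) \<in> FA" "Rep_falg (\<Sum>s\<in>S. x s) \<in> FA"
    using insert by (auto simp: in_FA_def[symmetric] intro: in_FA_sum)
  ultimately have "h (Rep_falg (\<Sum>s\<in>insert s S. x s)) = fa_add (h (Rep_falg (x s))) (h (Rep_falg (\<Sum>s\<in>S. x s)))"
    using h by (simp add: fa_endo_def)
  then show ?case using insert by (simp add: Abs_falg_add)
qed

lemma fa_endo_fa_mono:
  assumes h: "fa_endo h" and "L \<noteq> []"
  shows "Abs_falg (h (fa_mono L)) = prod_list (map (\<lambda>i. Abs_falg (h (fa_mono [i]))) L)"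
  using assms(2)
proof (induction L)
  case Nil then show ?case by simp
next
  case (Cons i L)
  show ?case
  proof (cases "L = []")
    case True then show ?thesis by simp
  next
    case False
    have "fa_mono (i # L) = fa_mult (fa_mono [i]) (fa_mono L)"
      using fa_mono_append[of "[i]" L] by simp
    moreover have "h (fa_mult (fa_mono [i]) (fa_mono L)) = fa_mult (h (fa_mono [i])) (h (fa_mono L))"
      using h FA_mono[of "[i]"] FA_mono[OF False] unfolding fa_endo_def by blast
    ultimately have "h (fa_mono (i # L)) = fa_mult (h (fa_mono [i])) (h (fa_mono L))" by metis
    then show ?thesis using Cons.IH[OF False] by (simp add: Abs_falg_mult)
  qed
qed

lemma S_poly_eq_sum_monom:
  "S_poly d = Rep_falg (\<Sum>\<sigma>\<in>{\<sigma>. \<sigma> permutes {1..d}}. monom (map \<sigma> [1..<Suc d]))"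
  by (rule ext) (simp add: S_poly_def Rep_falg_sum finite_permutations monom.rep_eq)

lemma S_poly_FA: "d \<ge> 1 \<Longrightarrow> S_poly d \<in> FA"
proof -
  assume d: "d \<ge> 1"
  have "in_FA (\<Sum>\<sigma>\<in>{\<sigma>. \<sigma> permutes {1..d}}. monom (map \<sigma> [1..<Suc d]) :: 'a falg)"
    using d by (intro in_FA_sum in_FA_monom) (auto simp: finite_permutations)
  then show ?thesis by (simp add: S_poly_eq_sum_monom in_FA_def)
qed

lemma fa_endo_S_poly:
  assumes h: "fa_endo h" and d: "d \<ge> 1"
  shows "Abs_falg (h (S_poly d)) = sym_prod {1..d} (\<lambda>i. Abs_falg (h (fa_mono [i])))"
proof -
  have ne: "map \<sigma> [1..<Suc d] \<noteq> []" for \<sigma> :: "nat \<Rightarrow> nat" using d by simp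
  have sL: "set [1..<Suc d] = {1..d}" by auto
  have "Abs_falg (h (S_poly d)) = (\<Sum>\<sigma>\<in>{\<sigma>. \<sigma> permutes {1..d}}. Abs_falg (h (Rep_falg (monom (map \<sigma> [1..<Suc d])))))"
    unfolding S_poly_eq_sum_monom by (rule fa_endo_sum[OF h finite_permutations[OF finite_atLeastAtMost]]) (rule in_FA_monom[OF ne])
  also have "\<dots> = (\<Sum>\<sigma>\<in>{\<sigma>. \<sigma> permutes set [1..<Suc d]}. prod_list (map (\<lambda>i. Abs_falg (h (fa_mono [i]))) (map \<sigma> [1..<Suc d])))"
  proof (rule sum.cong)
    show "{\<sigma>. \<sigma> permutes {1..d}} = {\<sigma>. \<sigma> permutes set [1..<Suc d]}" by (simp only: sL)
  next
    fix \<sigma> :: "nat \<Rightarrow> nat"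
    show "Abs_falg (h (Rep_falg (monom (map \<sigma> [1..<Suc d])))) = prod_list (map (\<lambda>i. Abs_falg (h (fa_mono [i]))) (map \<sigma> [1..<Suc d]))"
      unfolding monom.rep_eq by (rule fa_endo_fa_mono[OF h ne])
  qed
  also have "\<dots> = sym_prod (set [1..<Suc d]) (\<lambda>i. Abs_falg (h (fa_mono [i])))"
    unfolding map_map comp_def by (rule sum_permutes_eq_sym_prod) simp
  finally show ?thesis by (simp only: sL)
qed

lemma sym_prod_in_endo_image:
  assumes "\<And>i. in_FA (\<psi> i)" "d \<ge> 1"
  shows "\<exists>h. fa_endo h \<and> Rep_falg (sym_prod {1..d} \<psi>) = h (S_poly d)"
proof (intro exI conjI)
  show "fa_endo (subst_endo \<psi>)" by (rule fa_endo_subst_endo[OF assms(1)])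
  have "Abs_falg (subst_endo \<psi> (S_poly d)) = sym_prod {1..d} (\<lambda>i. Abs_falg (subst_endo \<psi> (fa_mono [i])))"
    by (rule fa_endo_S_poly[OF fa_endo_subst_endo[OF assms(1)] assms(2)])
  also have "(\<lambda>i. Abs_falg (subst_endo \<psi> (fa_mono [i]))) = \<psi>" by (simp add: subst_endo_var Rep_falg_inverse)
  finally show "Rep_falg (sym_prod {1..d} \<psi>) = subst_endo \<psi> (S_poly d)" by (metis Abs_falg_inverse UNIV_I)
qed

section \<open>Linear spans and T-spaces\<close>

inductive_set lin_span :: "('k::field) fa set \<Rightarrow> 'k fa set" for A where
  lin_span_zero: "fa_zero \<in> lin_span A"
| lin_span_base: "a \<in> A \<Longrightarrow> a \<in> lin_span A"
| lin_span_add: "x \<in> lin_span A \<Longrightarrow> y \<in> lin_span A \<Longrightarrow> fa_add x y \<in> lin_span A"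
| lin_span_smult: "x \<in> lin_span A \<Longrightarrow> fa_smult c x \<in> lin_span A"

lemma lin_span_FA: assumes A: "A \<subseteq> FA" shows "lin_span A \<subseteq> FA"
proof
  fix x assume x: "x \<in> lin_span A"
  from x show "x \<in> FA" using A by (induction rule: lin_span.induct) (auto simp: FA_zero FA_add FA_smult)
qed

lemma lin_span_subspace: assumes "A \<subseteq> FA" shows "fa_subspace (lin_span A)"
  using lin_span_FA[OF assms] unfolding fa_subspace_def by (auto intro: lin_span.intros)

lemma lin_span_least: assumes V: "fa_subspace V" "A \<subseteq> V" shows "lin_span A \<subseteq> V"
proof
  fix x assume x: "x \<in> lin_span A"
  from x show "x \<in> V" using V by (induction rule: lin_span.induct) (auto simp: fa_subspace_def)
qed

lemma lin_span_mono: assumes AB: "A \<subseteq> B" shows "lin_span A \<subseteq> lin_span B"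
proof
  fix x assume x: "x \<in> lin_span A"
  from x show "x \<in> lin_span B" using AB by (induction rule: lin_span.induct) (auto intro: lin_span.intros)
qed

lemma lin_span_idem: "lin_span (lin_span A) = lin_span A"
proof
  show "lin_span (lin_span A) \<subseteq> lin_span A"
  proof
    fix x assume "x \<in> lin_span (lin_span A)"
    then show "x \<in> lin_span A" by (induction rule: lin_span.induct) (auto intro: lin_span.intros)
  qed
qed (auto intro: lin_span.intros)

lemma lin_span_subspace_eq: "fa_subspace V \<Longrightarrow> lin_span V = V"
  using lin_span_least[of V V] lin_span.lin_span_base[of _ V] by blast

lemma fa_subspace_set_add:
  assumes A: "fa_subspace A" and B: "fa_subspace B"
  shows "fa_subspace (set_add A B)"
  unfolding fa_subspace_def
proof (intro conjI ballI allI)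
  show "set_add A B \<subseteq> FA" using A B unfolding fa_subspace_def set_add_def by (auto intro: FA_add)
  show "fa_zero \<in> set_add A B" using A B unfolding fa_subspace_def set_add_def
    by (intro CollectI exI[of _ fa_zero] conjI) (auto simp: fa_add_zero_left)
next
  fix x y assume "x \<in> set_add A B" "y \<in> set_add A B"
  then obtain a b a' b' where xy: "x = fa_add a b" "y = fa_add a' b'" "a \<in> A" "b \<in> B" "a' \<in> A" "b' \<in> B"
    unfolding set_add_def by blast
  have "fa_add x y = fa_add (fa_add a a') (fa_add b b')" using xy by (auto simp: fun_eq_iff fa_add_def)
  moreover have "fa_add a a' \<in> A" "fa_add b b' \<in> B" using A B xy unfolding fa_subspace_def by auto
  ultimately show "fa_add x y \<in> set_add A B" unfolding set_add_def by blast
next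
  fix c x assume "x \<in> set_add A B"
  then obtain a b where xy: "x = fa_add a b" "a \<in> A" "b \<in> B"
    unfolding set_add_def by blast
  have "fa_smult c x = fa_add (fa_smult c a) (fa_smult c b)"
    using xy by (auto simp: fun_eq_iff fa_add_def fa_smult_def ring_distribs)
  moreover have "fa_smult c a \<in> A" "fa_smult c b \<in> B" using A B xy unfolding fa_subspace_def by auto
  ultimately show "fa_smult c x \<in> set_add A B" unfolding set_add_def by blast
qed

lemma set_add_subset_left:
  assumes "fa_subspace B"
  shows "A \<subseteq> set_add A B"
proof
  fix a assume "a \<in> A"
  moreover have "fa_zero \<in> B" using assms by (simp add: fa_subspace_def)
  ultimately show "a \<in> set_add A B"
    unfolding set_add_def using fa_add_zero_right[of a, symmetric] by blast
qed

lemma set_add_subset_right: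
  assumes "fa_subspace A"
  shows "B \<subseteq> set_add A B"
proof
  fix b assume "b \<in> B"
  moreover have "fa_zero \<in> A" using assms by (simp add: fa_subspace_def)
  ultimately show "b \<in> set_add A B"
    unfolding set_add_def using fa_add_zero_left[of b, symmetric] by blast
qed

lemma subspace_add: "fa_subspace V \<Longrightarrow> Rep_falg x \<in> V \<Longrightarrow> Rep_falg y \<in> V \<Longrightarrow> Rep_falg (x + y) \<in> V"
  by (simp add: Rep_falg_add fa_subspace_def)

lemma subspace_diff: "fa_subspace V \<Longrightarrow> Rep_falg x \<in> V \<Longrightarrow> Rep_falg y \<in> V \<Longrightarrow> Rep_falg (x - y) \<in> V"
proof -
  assume V: "fa_subspace V" "Rep_falg x \<in> V" "Rep_falg y \<in> V"
  have "Rep_falg (x - y) = fa_add (Rep_falg x) (fa_smult (-1) (Rep_falg y))"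
    by (simp add: Rep_falg_minus fun_eq_iff fa_add_def fa_smult_def)
  then show ?thesis using V by (simp add: fa_subspace_def)
qed

lemma subspace_sum:
  assumes V: "fa_subspace V" and "finite J" and "\<And>j. j \<in> J \<Longrightarrow> Rep_falg (f j) \<in> V"
  shows "Rep_falg (\<Sum>j\<in>J. f j) \<in> V"
  using assms(2,3)
proof (induction J rule: finite_induct)
  case empty then show ?case using V by (simp add: Rep_falg_zero fa_subspace_def)
next
  case (insert j J) then show ?case by (simp add: subspace_add[OF V])
qed

definition endo_image :: "('k::field) fa set \<Rightarrow> 'k fa set" where
  "endo_image A = {h a | h a. fa_endo h \<and> a \<in> A}"

lemma fa_endo_id: "fa_endo id" by (simp add: fa_endo_def)

lemma fa_endo_comp: "fa_endo g \<Longrightarrow> fa_endo h \<Longrightarrow> fa_endo (g \<circ> h)"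
  unfolding fa_endo_def by (simp add: FA_add FA_smult FA_mult)

lemma endo_image_FA: "A \<subseteq> FA \<Longrightarrow> endo_image A \<subseteq> FA"
  unfolding endo_image_def fa_endo_def by auto

lemma subset_endo_image: "A \<subseteq> endo_image A"
proof
  fix a assume "a \<in> A"
  then show "a \<in> endo_image A" unfolding endo_image_def
    by (intro CollectI exI[of _ id] exI[of _ a] conjI fa_endo_id) auto
qed

lemma fa_endo_lin_span:
  assumes g: "fa_endo g" and A: "A \<subseteq> FA" and x: "x \<in> lin_span A"
  shows "g x \<in> lin_span (g ` A)"
  using x
proof (induction rule: lin_span.induct)
  case lin_span_zero then show ?case by (simp add: fa_endo_zero[OF g] lin_span.lin_span_zero)
next
  case (lin_span_base a) then show ?case by (auto intro: lin_span.lin_span_base)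
next
  case (lin_span_add x y)
  have "x \<in> FA" "y \<in> FA" using lin_span_add.hyps lin_span_FA[OF A] by auto
  then have "g (fa_add x y) = fa_add (g x) (g y)" using g by (simp add: fa_endo_def)
  then show ?case using lin_span_add.IH by (auto intro: lin_span.lin_span_add)
next
  case (lin_span_smult x c)
  have "x \<in> FA" using lin_span_smult.hyps lin_span_FA[OF A] by auto
  then have "g (fa_smult c x) = fa_smult c (g x)" using g by (simp add: fa_endo_def)
  then show ?case using lin_span_smult.IH by (auto intro: lin_span.lin_span_smult)
qed

lemma endo_image_closed: assumes g: "fa_endo g" shows "g ` endo_image A \<subseteq> endo_image A"
proof
  fix z assume "z \<in> g ` endo_image A"
  then obtain h a where z: "z = g (h a)" "fa_endo h" "a \<in> A" unfolding endo_image_def by auto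
  then show "z \<in> endo_image A" unfolding endo_image_def
    by (intro CollectI exI[of _ "g \<circ> h"] exI[of _ a] conjI fa_endo_comp[OF g]) auto
qed

lemma lin_span_endo_image_closed:
  assumes g: "fa_endo g" and A: "A \<subseteq> FA" and f: "f \<in> lin_span (endo_image A)"
  shows "g f \<in> lin_span (endo_image A)"
proof -
  have "g f \<in> lin_span (g ` endo_image A)" by (rule fa_endo_lin_span[OF g endo_image_FA[OF A] f])
  also have "\<dots> \<subseteq> lin_span (endo_image A)" by (rule lin_span_mono[OF endo_image_closed[OF g]])
  finally show ?thesis .
qed

lemma T_space_lin_span_endo_image: "A \<subseteq> FA \<Longrightarrow> T_space (lin_span (endo_image A))"
  unfolding T_space_def using lin_span_subspace[OF endo_image_FA] lin_span_endo_image_closed by blast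

lemma T_gen_eq_lin_span: "A \<subseteq> FA \<Longrightarrow> T_gen A = lin_span (endo_image A)"
proof
  assume A: "A \<subseteq> FA"
  show "T_gen A \<subseteq> lin_span (endo_image A)"
    unfolding T_gen_def using T_space_lin_span_endo_image[OF A] subset_endo_image[of A] lin_span.lin_span_base by blast
  show "lin_span (endo_image A) \<subseteq> T_gen A"
    unfolding T_gen_def
  proof (rule Inter_greatest)
    fix V assume "V \<in> {V. T_space V \<and> A \<subseteq> V}"
    then have V: "T_space V" "A \<subseteq> V" by auto
    have "endo_image A \<subseteq> V" using V unfolding endo_image_def T_space_def by auto
    then show "lin_span (endo_image A) \<subseteq> V" using V by (intro lin_span_least) (auto simp: T_space_def)
  qed
qed

lemma T_space_T_gen: "A \<subseteq> FA \<Longrightarrow> T_space (T_gen A)"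
  by (simp add: T_gen_eq_lin_span T_space_lin_span_endo_image)

lemma subset_T_gen: "A \<subseteq> FA \<Longrightarrow> A \<subseteq> T_gen A"
  by (simp add: T_gen_eq_lin_span) (meson subset_endo_image lin_span.lin_span_base subset_iff)

lemma T_space_FA: "T_space V \<Longrightarrow> V \<subseteq> FA" by (simp add: T_space_def fa_subspace_def)

lemma set_mult_FA: "A \<subseteq> FA \<Longrightarrow> B \<subseteq> FA \<Longrightarrow> set_mult A B \<subseteq> FA"
  unfolding set_mult_def by (auto intro: FA_mult)

lemma T_gen_set_mult_T_space:
  assumes X: "T_space X" and Y: "T_space Y"
  shows "T_gen (set_mult X Y) = lin_span (set_mult X Y)"
proof -
  have XY: "set_mult X Y \<subseteq> FA" by (rule set_mult_FA[OF T_space_FA[OF X] T_space_FA[OF Y]])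
  have "endo_image (set_mult X Y) \<subseteq> set_mult X Y"
  proof
    fix z assume "z \<in> endo_image (set_mult X Y)"
    then obtain h x y where z: "z = h (fa_mult x y)" "fa_endo h" "x \<in> X" "y \<in> Y"
      unfolding endo_image_def set_mult_def by auto
    have "x \<in> FA" "y \<in> FA" using z T_space_FA[OF X] T_space_FA[OF Y] by auto
    then have "z = fa_mult (h x) (h y)" using z by (simp add: fa_endo_def)
    moreover have "h x \<in> X" "h y \<in> Y" using z X Y by (auto simp: T_space_def)
    ultimately show "z \<in> set_mult X Y" unfolding set_mult_def by auto
  qed
  then have "endo_image (set_mult X Y) = set_mult X Y" using subset_endo_image by blast
  then show ?thesis using T_gen_eq_lin_span[OF XY] by simp
qed

lemma fa_mult_mem_lin_span_left:
  assumes x: "x \<in> lin_span A" and y: "y \<in> B"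
  shows "fa_mult x y \<in> lin_span (set_mult A B)"
  using x
proof (induction rule: lin_span.induct)
  case lin_span_zero then show ?case by (simp add: fa_mult_zero_left lin_span.lin_span_zero)
next
  case (lin_span_base a) then show ?case using y by (auto simp: set_mult_def intro: lin_span.lin_span_base)
next
  case (lin_span_add x1 x2) then show ?case by (simp add: fa_mult_add_left lin_span.lin_span_add)
next
  case (lin_span_smult x c) then show ?case by (simp add: fa_mult_smult_left lin_span.lin_span_smult)
qed

lemma fa_mult_mem_lin_span:
  assumes x: "x \<in> lin_span A" and y: "y \<in> lin_span B"
  shows "fa_mult x y \<in> lin_span (set_mult A B)"
  using y
proof (induction rule: lin_span.induct)
  case lin_span_zero then show ?case by (simp add: fa_mult_zero_right lin_span.lin_span_zero)
next
  case (lin_span_base b) then show ?case by (rule fa_mult_mem_lin_span_left[OF x])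
next
  case (lin_span_add y1 y2) then show ?case by (simp add: fa_mult_add_right lin_span.lin_span_add)
next
  case (lin_span_smult y c) then show ?case by (simp add: fa_mult_smult_right lin_span.lin_span_smult)
qed

lemma lin_span_set_mult:
  "lin_span (set_mult (lin_span A) (lin_span B)) = lin_span (set_mult A B)"
proof
  show "lin_span (set_mult (lin_span A) (lin_span B)) \<subseteq> lin_span (set_mult A B)"
  proof -
    have "set_mult (lin_span A) (lin_span B) \<subseteq> lin_span (set_mult A B)"
      using fa_mult_mem_lin_span by (auto simp: set_mult_def)
    then have "lin_span (set_mult (lin_span A) (lin_span B)) \<subseteq> lin_span (lin_span (set_mult A B))" by (rule lin_span_mono)
    then show ?thesis by (simp add: lin_span_idem)
  qed
  show "lin_span (set_mult A B) \<subseteq> lin_span (set_mult (lin_span A) (lin_span B))"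
    by (rule lin_span_mono) (auto simp: set_mult_def intro: lin_span.lin_span_base)
qed

lemma set_mult_assoc: "set_mult (set_mult A B) C = set_mult A (set_mult B C)"
  unfolding set_mult_def by (auto simp: fa_mult_assoc) (metis, metis fa_mult_assoc)

primrec set_power :: "('k::field) fa set \<Rightarrow> nat \<Rightarrow> 'k fa set" where
  "set_power V 0 = V"
| "set_power V (Suc n) = set_mult (set_power V n) V"

lemma set_mult_set_power: "set_mult (set_power V m) (set_power V n) = set_power V (Suc (m + n))"
proof (induction n)
  case 0 then show ?case by simp
next
  case (Suc n)
  have "set_mult (set_power V m) (set_power V (Suc n)) = set_mult (set_mult (set_power V m) (set_power V n)) V"
    by (simp add: set_mult_assoc)
  then show ?case using Suc by simp
qed

section \<open>The T-spaces \<open>S_T d n\<close>\<close>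

declare S_T.simps(2,3) [simp del]

lemma S_T_1_eq_lin_span: "d \<ge> 1 \<Longrightarrow> (S_T d (Suc 0) :: ('k::field) fa set) = lin_span (endo_image {S_poly d})"
  unfolding S_T.simps(2) by (rule T_gen_eq_lin_span) (simp add: S_poly_FA)

lemma T_space_S_T_1: "d \<ge> 1 \<Longrightarrow> T_space (S_T d (Suc 0) :: ('k::field) fa set)"
  unfolding S_T.simps(2) by (rule T_space_T_gen) (simp add: S_poly_FA)

lemma T_space_S_T:
  assumes d: "d \<ge> 1"
  shows "T_space (S_T d (Suc n) :: ('k::field) fa set)"
proof (induction n)
  case 0
  show ?case by (rule T_space_S_T_1[OF d])
next
  case (Suc n)
  have "set_mult (S_T d (Suc n)) (S_T d (Suc 0)) \<subseteq> (FA :: 'k fa set)"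
    using T_space_FA[OF Suc.IH] T_space_FA[OF T_space_S_T_1[OF d]] by (rule set_mult_FA)
  then show ?case unfolding S_T.simps(3) by (rule T_space_T_gen)
qed

lemma S_T_FA: "d \<ge> 1 \<Longrightarrow> (S_T d (Suc n) :: ('k::field) fa set) \<subseteq> FA"
  by (rule T_space_FA[OF T_space_S_T])

lemma fa_subspace_S_T: "d \<ge> 1 \<Longrightarrow> fa_subspace (S_T d (Suc n) :: ('k::field) fa set)"
  using T_space_S_T[of d n] unfolding T_space_def by blast

lemma S_T_Suc_eq_lin_span:
  assumes d: "d \<ge> 1"
  shows "(S_T d (Suc n) :: ('k::field) fa set) = lin_span (set_power (S_T d (Suc 0)) n)"
proof (induction n)
  case 0
  show ?case by (simp only: set_power.simps(1) lin_span_subspace_eq[OF fa_subspace_S_T[OF d]])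
next
  case (Suc n)
  have "(S_T d (Suc (Suc n)) :: 'k fa set) = lin_span (set_mult (S_T d (Suc n)) (S_T d (Suc 0)))"
    unfolding S_T.simps(3) by (intro T_gen_set_mult_T_space T_space_S_T d)
  also have "\<dots> = lin_span (set_mult (lin_span (set_power (S_T d (Suc 0)) n)) (lin_span (S_T d (Suc 0))))"
    by (simp only: Suc.IH[symmetric] lin_span_subspace_eq[OF fa_subspace_S_T[OF d]])
  also have "\<dots> = lin_span (set_power (S_T d (Suc 0)) (Suc n))"
    by (simp only: lin_span_set_mult set_power.simps)
  finally show ?case .
qed

lemma T_gen_set_mult_S_T:
  assumes d: "d \<ge> 1" and "m \<ge> 1" "n \<ge> 1"
  shows "T_gen (set_mult (S_T d m) (S_T d n)) = (S_T d (m + n) :: ('k::field) fa set)"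
proof -
  obtain m' n' where mn: "m = Suc m'" "n = Suc n'" using assms by (cases m; cases n) auto
  have "T_gen (set_mult (S_T d m) (S_T d n) :: 'k fa set) = lin_span (set_mult (S_T d m) (S_T d n))"
    unfolding mn by (intro T_gen_set_mult_T_space T_space_S_T d)
  also have "\<dots> = lin_span (set_mult (lin_span (set_power (S_T d (Suc 0)) m'))
                                     (lin_span (set_power (S_T d (Suc 0)) n')))"
    by (simp only: mn S_T_Suc_eq_lin_span[OF d, of m'] S_T_Suc_eq_lin_span[OF d, of n'])
  also have "\<dots> = lin_span (set_power (S_T d (Suc 0)) (Suc (m' + n')))"
    by (simp only: lin_span_set_mult set_mult_set_power)
  also have "\<dots> = S_T d (m + n)"
    by (simp only: mn S_T_Suc_eq_lin_span[OF d, of "Suc (m' + n')"] add_Suc add_Suc_right)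
  finally show ?thesis .
qed

lemma fa_mult_mem_S_T:
  assumes d: "d \<ge> 1" and mn: "m \<ge> 1" "n \<ge> 1" and "f \<in> S_T d m" "g \<in> S_T d n"
  shows "fa_mult f g \<in> (S_T d (m + n) :: ('k::field) fa set)"
proof -
  have FA: "S_T d m \<subseteq> FA" "S_T d n \<subseteq> (FA :: 'k fa set)"
    using mn S_T_FA[OF d, of "m - 1"] S_T_FA[OF d, of "n - 1"] by simp_all
  have "fa_mult f g \<in> set_mult (S_T d m) (S_T d n)"
    using assms(4,5) unfolding set_mult_def by blast
  also have "\<dots> \<subseteq> T_gen (set_mult (S_T d m) (S_T d n))"
    by (intro subset_T_gen set_mult_FA FA)
  also have "\<dots> = S_T d (m + n)"
    by (rule T_gen_set_mult_S_T[OF d mn])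
  finally show ?thesis .
qed

lemma sym_prod_mem_S_T_1:
  assumes "d \<ge> 1" "\<And>i. in_FA (\<psi> i)"
  shows "Rep_falg (sym_prod {1..d} \<psi>) \<in> (S_T d (Suc 0) :: ('k::field) fa set)"
proof -
  have "\<exists>h. fa_endo h \<and> Rep_falg (sym_prod {1..d} \<psi>) = h (S_poly d)"
    using assms(2,1) by (rule sym_prod_in_endo_image)
  then obtain h where "fa_endo h" "Rep_falg (sym_prod {1..d} \<psi>) = h (S_poly d)" by blast
  then have "Rep_falg (sym_prod {1..d} \<psi>) \<in> endo_image {S_poly d}"
    unfolding endo_image_def by blast
  then show ?thesis
    unfolding S_T_1_eq_lin_span[OF assms(1)] by (rule lin_span.lin_span_base)
qed

lemma sym_prod_mem_set_add:
  assumes "d \<ge> 1" "\<And>i. in_FA (\<psi> i)"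
  shows "Rep_falg (sym_prod {1..d} \<psi>) \<in> set_add (S_T d (Suc m)) (S_T d (Suc 0) :: ('k::field) fa set)"
proof -
  have "Rep_falg (sym_prod {1..d} \<psi>) \<in> (S_T d (Suc 0) :: 'k fa set)"
    using assms by (rule sym_prod_mem_S_T_1)
  then show ?thesis using set_add_subset_right[OF fa_subspace_S_T[OF assms(1), of m]] ..
qed

lemma mult_sym_prod_mem_set_add:
  assumes d: "d \<ge> 1" and m: "m \<ge> 1" and "Rep_falg X \<in> S_T d m" "\<And>i. in_FA (\<psi> i)"
  shows "Rep_falg (X * sym_prod {1..d} \<psi>) \<in> set_add (S_T d (Suc m)) (S_T d (Suc 0) :: ('k::field) fa set)"
proof -
  have "Rep_falg (sym_prod {1..d} \<psi>) \<in> S_T d (Suc 0)" using d assms(4) by (rule sym_prod_mem_S_T_1)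
  have "fa_mult (Rep_falg X) (Rep_falg (sym_prod {1..d} \<psi>)) \<in> S_T d (m + 1)"
    using d m assms(3) \<open>Rep_falg (sym_prod {1..d} \<psi>) \<in> S_T d (Suc 0)\<close> by (intro fa_mult_mem_S_T) simp_all
  then show ?thesis
    using set_add_subset_left[OF fa_subspace_S_T[OF d]] by (auto simp: Rep_falg_mult)
qed

lemma sym_prod_mult_mem_set_add:
  assumes d: "d \<ge> 1" and m: "m \<ge> 1" and "Rep_falg Y \<in> S_T d m" "\<And>i. in_FA (\<psi> i)"
  shows "Rep_falg (sym_prod {1..d} \<psi> * Y) \<in> set_add (S_T d (Suc m)) (S_T d (Suc 0) :: ('k::field) fa set)"
proof -
  have "Rep_falg (sym_prod {1..d} \<psi>) \<in> S_T d (Suc 0)" using d assms(4) by (rule sym_prod_mem_S_T_1)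
  have "fa_mult (Rep_falg (sym_prod {1..d} \<psi>)) (Rep_falg Y) \<in> S_T d (1 + m)"
    using d m assms(3) \<open>Rep_falg (sym_prod {1..d} \<psi>) \<in> S_T d (Suc 0)\<close> by (intro fa_mult_mem_S_T) simp_all
  then show ?thesis
    using set_add_subset_left[OF fa_subspace_S_T[OF d]] by (auto simp: Rep_falg_mult)
qed

text \<open>Instantiate \<open>sym_prod_sandwich\<close> with \<open>a = 1\<close> and \<open>J = {2..d}\<close>: each of its five terms lies in
  \<open>S_T d 1 \<cdot> S_T d m\<close>, \<open>S_T d 1\<close> or \<open>S_T d m \<cdot> S_T d 1\<close>.\<close>

lemma sandwich_sym_prod_mem_set_add:
  assumes d: "d \<ge> 1" and m: "m \<ge> 1"
    and X: "Rep_falg X \<in> S_T d m" and Y: "Rep_falg Y \<in> S_T d m" and \<psi>: "\<And>i. in_FA (\<psi> i)"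
  shows "Rep_falg (X * sym_prod {1..d} \<psi> * Y) \<in> set_add (S_T d (Suc m)) (S_T d (Suc 0) :: ('k::field) fa set)"
proof -
  have V: "fa_subspace (set_add (S_T d (Suc m)) (S_T d (Suc 0) :: 'k fa set))"
    by (intro fa_subspace_set_add fa_subspace_S_T d)
  have XY: "in_FA X" "in_FA Y"
    using X Y S_T_FA[OF d, of "m - 1"] m by (auto simp: in_FA_def)
  have "insert 1 {2..d} = {1..d}" "(1::nat) \<notin> {2..d}" using d by auto
  from sym_prod_sandwich[OF finite_atLeastAtMost this(2), where \<phi> = \<psi> and M = X and N = Y,
      unfolded this(1)]
  show ?thesis
    by (simp only:) (intro subspace_add[OF V] subspace_diff[OF V] subspace_sum[OF V]
        finite_atLeastAtMost sym_prod_mem_set_add mult_sym_prod_mem_set_add sym_prod_mult_mem_set_add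
        d m X Y; simp add: \<psi> XY in_FA_mult)
qed

lemma fa_mult_endo_S_poly_mem:
  assumes d: "d \<ge> 1" and m: "m \<ge> 1" and M: "M \<in> S_T d m" and N: "N \<in> S_T d m" and h: "fa_endo h"
  shows "fa_mult (fa_mult M (h (S_poly d))) N \<in> set_add (S_T d (Suc m)) (S_T d (Suc 0) :: ('k::field) fa set)"
proof -
  define \<psi> where "\<psi> = (\<lambda>i. Abs_falg (h (fa_mono [i])))"
  have \<psi>: "in_FA (\<psi> i)" for i
    using h FA_mono[of "[i]"] unfolding \<psi>_def fa_endo_def by (blast intro: in_FA_Abs_falg)
  have "Rep_falg (sym_prod {1..d} \<psi>) = h (S_poly d)"
    unfolding \<psi>_def fa_endo_S_poly[OF h d, symmetric] by (simp add: Abs_falg_inverse)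
  then have "fa_mult (fa_mult M (h (S_poly d))) N = Rep_falg (Abs_falg M * sym_prod {1..d} \<psi> * Abs_falg N)"
    by (simp add: Rep_falg_mult Abs_falg_inverse)
  also have "\<dots> \<in> set_add (S_T d (Suc m)) (S_T d (Suc 0))"
    using M N by (intro sandwich_sym_prod_mem_set_add d m \<psi>) (simp_all add: Abs_falg_inverse)
  finally show ?thesis .
qed

lemma fa_mult_S_T_1_mem:
  assumes d: "d \<ge> 1" and m: "m \<ge> 1" and "M \<in> S_T d m" "N \<in> S_T d m" "b \<in> S_T d (Suc 0)"
  shows "fa_mult (fa_mult M b) N \<in> set_add (S_T d (Suc m)) (S_T d (Suc 0) :: ('k::field) fa set)"
proof -
  have V: "fa_subspace (set_add (S_T d (Suc m)) (S_T d (Suc 0) :: 'k fa set))"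
    by (intro fa_subspace_set_add fa_subspace_S_T d)
  have "b \<in> lin_span (endo_image {S_poly d})" using assms(5) by (simp add: S_T_1_eq_lin_span[OF d])
  then show ?thesis
  proof (induction rule: lin_span.induct)
    case lin_span_zero
    then show ?case using V by (simp add: fa_mult_zero_left fa_mult_zero_right fa_subspace_def)
  next
    case (lin_span_base a)
    then show ?case using fa_mult_endo_S_poly_mem[OF d m assms(3,4)] by (auto simp: endo_image_def)
  next
    case (lin_span_add x y)
    then show ?case using V by (simp add: fa_mult_add_left fa_mult_add_right fa_subspace_def)
  next
    case (lin_span_smult x c)
    then show ?case using V by (simp add: fa_mult_smult_left fa_mult_smult_right fa_subspace_def)
  qed
qed

lemma S_T_odd_subset:
  assumes d: "d \<ge> 1" and m: "m \<ge> 1"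
  shows "(S_T d (2 * m + 1) :: ('k::field) fa set) \<subseteq> set_add (S_T d (m + 1)) (S_T d 1)"
proof -
  obtain k where k: "m = Suc k" using m by (cases m) auto
  let ?P = "set_power (S_T d (Suc 0) :: 'k fa set)"
  have V: "fa_subspace (set_add (S_T d (Suc m)) (S_T d (Suc 0) :: 'k fa set))"
    by (intro fa_subspace_set_add fa_subspace_S_T d)
  have P: "?P k \<subseteq> S_T d m"
    unfolding k S_T_Suc_eq_lin_span[OF d, of k] by (rule subsetI lin_span.lin_span_base)+
  have "?P (Suc (Suc k + k)) = set_mult (set_mult (?P k) (S_T d (Suc 0))) (?P k)"
    by (simp only: set_power.simps(2)[symmetric] set_mult_set_power)
  moreover have "2 * m + 1 = Suc (Suc (Suc k + k))" using k by simp
  ultimately have "(S_T d (2 * m + 1) :: 'k fa set)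
      = lin_span (set_mult (set_mult (?P k) (S_T d (Suc 0))) (?P k))"
    by (simp only: S_T_Suc_eq_lin_span[OF d, of "Suc (Suc k + k)"])
  also have "\<dots> \<subseteq> set_add (S_T d (Suc m)) (S_T d (Suc 0))"
    using P unfolding set_mult_def by (intro lin_span_least[OF V]) (blast intro: fa_mult_S_T_1_mem[OF d m])
  finally show ?thesis by simp
qed

theorem corollary3p2:
  fixes p d :: nat
  assumes "prime p" and "CHAR('k::field) = p" and "d \<ge> 1"
  shows "(\<forall>m n. m \<ge> 1 \<longrightarrow> n \<ge> 1 \<longrightarrow>
            T_gen (set_mult (S_T d m) (S_T d n)) = (S_T d (m + n) :: 'k fa set))
       \<and> (\<forall>m. m \<ge> 1 \<longrightarrow>
            (S_T d (2 * m + 1) :: 'k fa set) \<subseteq> set_add (S_T d (m + 1)) (S_T d 1))"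
  using T_gen_set_mult_S_T[OF assms(3)] S_T_odd_subset[OF assms(3)] by blast

end
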